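(* Under the setting below, for any $\epsilon>0$, $$\mathcal{N}_{\mathcal{F}}(\epsilon)\le\mathcal{Z}_{\mathcal{F}}\big(\alpha\epsilon/(8|\mathcal{O}|^{H+1}|\mathcal{A}|^HH|\mathcal{U}_A|^2|\mathcal{U}|)\big).$$
   Context: Process: finite $\mathcal{O},\mathcal{A}$, horizon $H$; histories $\tau_h=(o_1,a_1,\dots,o_h,a_h)$; policies pick $a_h\sim\pi_h(\cdot\mid\tau_{h-1},o_h)$; $\pi(\tau_h)=\prod_{l\le h}\pi_l(a_l\mid\tau_{l-1},o_l)$; $\mathbb{P}^\pi_f(\tau_H)$ is the probability of $\tau_H$ under $\pi$ in model $f$. For a model $f$, a test starting at step $h$ is $t=(o_h,\dots,o_{h+W-1},a_h,\dots,a_{h+W-2})$; $\mathbb{P}_f(t\mid\tau_{h-1})$ is the probability of observing $o_{h:h+W-1}$ when executing $a_{h:h+W-2}$ after $\tau_{h-1}$ ($0$ if unreachable). A set $\mathcal{U}_h$ of tests starting at $h$ is a core test set if for every test $t$ starting at $h$ there is a history-independent $m_{t,h;f}$ with $\mathbb{P}_f(t\mid\tau_{h-1})=\langle m_{t,h;f},q_{\tau_{h-1};f}\rangle$, $q_{\tau_{h-1};f}=[\mathbb{P}_f(u\mid\tau_{h-1})]_{u\in\mathcal{U}_h}$; $q_{0;f}=[\mathbb{P}_f(u)]_{u\in\mathcal{U}_1}$; $M_{o,a,h;f}$ has rows $m_{(o,a,u),h;f}^\top$, $u\in\mathcal{U}_{h+1}$. $\mathcal{U}_{A,h}$: action sequences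 in $\mathcal{U}_h$; $|\mathcal{U}_A|=\max_h|\mathcal{U}_{A,h}|$; $|\mathcal{U}|=\max_h|\mathcal{U}_h|$. $d_{\mathrm{PSR},h;f}$ is the rank of the matrix with entries $\mathbb{P}_f(t\mid\tau_h)$. Core matrix $K_{h;f}$ ($h\ge1$): columns $q_{\tau_h^1;f},\dots,q_{\tau_h^{d_{\mathrm{PSR},h;f}};f}$ for histories whose predictive states span all $q_{\tau_h;f}$, chosen to minimize $\|K_{h;f}^\dagger\|_{1\to1}$; $K_{0;f}=q_{0;f}$. Standing assumptions: the true process $f^*$ is in $\mathcal{F}$; every $f\in\mathcal{F}$ is a valid PSR with core test sets $\{\mathcal{U}_h\}_{h\in[H]}$ and $\|K_{h;f}^\dagger\|_{1\to1}\le1/\alpha$ for $h\in\{0,\dots,H-1\}$; every $o\in\mathcal{O}$ belongs to $\mathcal{U}_H$, and $m_{o,H;f}=e_o$ (standard basis vector indexing $o$ in $\mathcal{U}_H$). Convention: for $f\in\mathcal{F}$ the vectors $m_{(o,a,u),h;f}$ lie in the column space of $K_{h-1;f}$. Bracket number: a size-$N$ $\epsilon$-bracket of $\mathcal{F}$ is $\{(g_1^i,g_2^i)\}_{i=1}^N$ of real functions of (policy, $\tau_H$) with $\sum_{\tau_H}|g_1^i(\pi,\tau_H)-g_2^i(\pi,\tau_H)|\le\epsilon$ for all $\pi,i$, such that each $f\in\mathcal{F}$ has some $i$ with $g_1^i(\pi,\tau_H)\le\mathbb{P}^\pi_f(\tau_H)\le g_2^i(\pi,\tau_H)$ for all $\tau_H,\pi$;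 $\mathcal{N}_{\mathcal{F}}(\epsilon)$ is the minimal $N$. Covering number: $\mathcal{Z}_{\mathcal{F}}(\epsilon)$ is the minimal $n$ such that there is a set $\mathcal{F}'$ of $n$ parameter tuples $\{m'_{(o,a,u),h},q'_0\}$ (not necessarily valid PSRs) such that for every $f\in\mathcal{F}$ some element satisfies $\max_{o,a,h\in[H-1],u\in\mathcal{U}_{h+1}}\|m_{(o,a,u),h;f}-m'_{(o,a,u),h}\|_\infty\le\epsilon$ and $\|q_{0;f}-q'_0\|_\infty\le\epsilon$. *)

theory Defs
  imports "HOL-Analysis.Analysis" "HOL-Library.Extended_Nat"
begin

type_synonym ('ob,'a) hist = "('ob \<times> 'a) list"

(* A (controlled) process / model f over horizon H is given by its conditional
   observation probabilities: f tau ob = P_f(o_{h} = ob | tau_{h-1} = tau, length tau = h-1). *)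
type_synonym ('ob,'a) model = "('ob,'a) hist \<Rightarrow> 'ob \<Rightarrow> real"

(* A policy: pi tau ob a = pi_h(a | tau_{h-1} = tau, o_h = ob), with h = length tau + 1. *)
type_synonym ('ob,'a) policy = "('ob,'a) hist \<Rightarrow> 'ob \<Rightarrow> 'a \<Rightarrow> real"

(* A test (o_h,...,o_{h+W-1}, a_h,...,a_{h+W-2}) : observation list and action list. *)
type_synonym ('ob,'a) test = "'ob list \<times> 'a list"

definition valid_model :: "nat \<Rightarrow> ('ob::finite,'a) model \<Rightarrow> bool" where
  "valid_model H f \<longleftrightarrow>
     (\<forall>\<tau>. length \<tau> < H \<longrightarrow> (\<forall>ob. 0 \<le> f \<tau> ob) \<and> (\<Sum>ob\<in>UNIV. f \<tau> ob) = 1)"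

definition valid_policy :: "('ob,'a::finite) policy \<Rightarrow> bool" where
  "valid_policy \<pi> \<longleftrightarrow> (\<forall>\<tau> ob. (\<forall>a. 0 \<le> \<pi> \<tau> ob a) \<and> (\<Sum>a\<in>UNIV. \<pi> \<tau> ob a) = 1)"

definition traj_prob :: "('ob,'a) model \<Rightarrow> ('ob,'a) policy \<Rightarrow> ('ob,'a) hist \<Rightarrow> real" where
  "traj_prob f \<pi> \<tau> =
     (\<Prod>i<length \<tau>. f (take i \<tau>) (fst (\<tau> ! i)) * \<pi> (take i \<tau>) (fst (\<tau> ! i)) (snd (\<tau> ! i)))"

definition reach_prob :: "('ob,'a) model \<Rightarrow> ('ob,'a) hist \<Rightarrow> real" where
  "reach_prob f \<tau> = (\<Prod>i<length \<tau>. f (take i \<tau>) (fst (\<tau> ! i)))"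

definition test_prob :: "('ob,'a) model \<Rightarrow> ('ob,'a) hist \<Rightarrow> ('ob,'a) test \<Rightarrow> real" where
  "test_prob f \<tau> t =
     (if reach_prob f \<tau> = 0 then 0
      else (\<Prod>i<length (fst t). f (\<tau> @ zip (take i (fst t)) (take i (snd t))) (fst t ! i)))"

definition is_test :: "nat \<Rightarrow> nat \<Rightarrow> ('ob,'a) test \<Rightarrow> bool" where
  "is_test H h t \<longleftrightarrow> 1 \<le> h \<and> length (fst t) = length (snd t) + 1 \<and> h + length (snd t) \<le> H"

definition core_tests :: "nat \<Rightarrow> (nat \<Rightarrow> ('ob,'a) test set) \<Rightarrow> ('ob,'a) model \<Rightarrow> bool" where
  "core_tests H U f \<longleftrightarrow>
     (\<forall>h\<in>{1..H}. finite (U h) \<and> (\<forall>u\<in>U h. is_test H h u) \<and>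
        (\<forall>t. is_test H h t \<longrightarrow>
           (\<exists>m::('ob,'a) test \<Rightarrow> real. \<forall>\<tau>. length \<tau> = h - 1 \<longrightarrow>
              test_prob f \<tau> t = (\<Sum>u\<in>U h. m u * test_prob f \<tau> u))))"

definition indep_cols :: "('ob,'a) test set \<Rightarrow> ('ob,'a) model \<Rightarrow> ('ob,'a) hist list \<Rightarrow> bool" where
  "indep_cols R f \<tau>s \<longleftrightarrow>
     (\<forall>c::nat \<Rightarrow> real. (\<forall>r\<in>R. (\<Sum>i<length \<tau>s. c i * test_prob f (\<tau>s ! i) r) = 0)
        \<longrightarrow> (\<forall>i<length \<tau>s. c i = 0))"

(* d_{PSR,h;f}: rank of the matrix [P_f(t | tau_h)], t a test starting at h+1, tau_h of length h *)
definition d_psr :: "nat \<Rightarrow> ('ob,'a) model \<Rightarrow> nat \<Rightarrow> nat" where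
  "d_psr H f h = Max {length \<tau>s | \<tau>s. (\<forall>\<tau>\<in>set \<tau>s. length \<tau> = h) \<and>
                        indep_cols {t. is_test H (h+1) t} f \<tau>s}"

(* X is the Moore-Penrose pseudo-inverse of the R x d matrix K (rows indexed by R, columns by i<d);
   X is d x R, written X i r. *)
definition is_pinv :: "('t set) \<Rightarrow> nat \<Rightarrow> ('t \<Rightarrow> nat \<Rightarrow> real) \<Rightarrow> (nat \<Rightarrow> 't \<Rightarrow> real) \<Rightarrow> bool" where
  "is_pinv R d K X \<longleftrightarrow>
     (let KX = (\<lambda>r s. \<Sum>i<d. K r i * X i s); XK = (\<lambda>i j. \<Sum>r\<in>R. X i r * K r j) in
       (\<forall>r\<in>R. \<forall>j<d. (\<Sum>s\<in>R. KX r s * K s j) = K r j) \<and>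
       (\<forall>i<d. \<forall>r\<in>R. (\<Sum>j<d. XK i j * X j r) = X i r) \<and>
       (\<forall>r\<in>R. \<forall>s\<in>R. KX r s = KX s r) \<and>
       (\<forall>i<d. \<forall>j<d. XK i j = XK j i))"

definition norm11_le :: "('t set) \<Rightarrow> nat \<Rightarrow> (nat \<Rightarrow> 't \<Rightarrow> real) \<Rightarrow> real \<Rightarrow> bool" where
  "norm11_le R d X c \<longleftrightarrow> (\<forall>r\<in>R. (\<Sum>i<d. \<bar>X i r\<bar>) \<le> c)"

(* \<parallel>K_{h;f}^\<dagger>\<parallel>_{1\<rightarrow>1} \<le> c, where K_{h;f} minimises this norm over admissible choices
   (a minimum over the finitely many choices is \<le> c iff some admissible choice is \<le> c). *)
definition core_matrix_bound :: "nat \<Rightarrow> (nat \<Rightarrow> ('ob,'a) test set) \<Rightarrow> ('ob::finite,'a::finite) model \<Rightarrow> nat \<Rightarrow> real \<Rightarrow> bool" where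
  "core_matrix_bound H U f h c \<longleftrightarrow>
     (if h = 0 then
        (\<exists>X. is_pinv (U 1) 1 (\<lambda>u i. test_prob f [] u) X \<and> norm11_le (U 1) 1 X c)
      else
        (\<exists>\<tau>s. length \<tau>s = d_psr H f h \<and> (\<forall>\<tau>\<in>set \<tau>s. length \<tau> = h) \<and>
           (\<forall>\<tau>. length \<tau> = h \<longrightarrow> (\<exists>a::nat \<Rightarrow> real. \<forall>u\<in>U (h+1).
               test_prob f \<tau> u = (\<Sum>i<length \<tau>s. a i * test_prob f (\<tau>s ! i) u))) \<and>
           (\<exists>X. is_pinv (U (h+1)) (length \<tau>s) (\<lambda>u i. test_prob f (\<tau>s ! i) u) X \<and>
                norm11_le (U (h+1)) (length \<tau>s) X c)))"

(* m_{t,h;f}: the vector in R^{U_h} with P_f(t|tau_{h-1}) = <m, q_{tau_{h-1};f}> for all tau_{h-1},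
   lying in the column space of K_{h-1;f} = span {q_{tau_{h-1};f}} (convention), extended by 0 off U_h. *)
definition m_vec :: "nat \<Rightarrow> (nat \<Rightarrow> ('ob,'a) test set) \<Rightarrow> ('ob::finite,'a::finite) model \<Rightarrow> nat \<Rightarrow> ('ob,'a) test \<Rightarrow> (('ob,'a) test \<Rightarrow> real)" where
  "m_vec H U f h t = (THE m. (\<forall>v. v \<notin> U h \<longrightarrow> m v = 0) \<and>
      (\<exists>c::('ob,'a) hist \<Rightarrow> real. \<forall>v\<in>U h. m v = (\<Sum>\<tau>\<in>{\<tau>. length \<tau> = h - 1}. c \<tau> * test_prob f \<tau> v)) \<and>
      (\<forall>\<tau>. length \<tau> = h - 1 \<longrightarrow> test_prob f \<tau> t = (\<Sum>v\<in>U h. m v * test_prob f \<tau> v)))"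

definition ext_test :: "'ob \<Rightarrow> 'a \<Rightarrow> ('ob,'a) test \<Rightarrow> ('ob,'a) test" where
  "ext_test ob a u = (ob # fst u, a # snd u)"

definition has_bracket :: "nat \<Rightarrow> ('ob,'a::finite) model set \<Rightarrow> real \<Rightarrow> nat \<Rightarrow> bool" where
  "has_bracket H F \<epsilon> N \<longleftrightarrow>
     (\<exists>g1 g2 :: nat \<Rightarrow> ('ob,'a) policy \<Rightarrow> ('ob,'a) hist \<Rightarrow> real.
        (\<forall>i<N. \<forall>\<pi>. valid_policy \<pi> \<longrightarrow>
            (\<Sum>\<tau>\<in>{\<tau>. length \<tau> = H}. \<bar>g1 i \<pi> \<tau> - g2 i \<pi> \<tau>\<bar>) \<le> \<epsilon>) \<and>
        (\<forall>f\<in>F. \<exists>i<N. \<forall>\<pi>. valid_policy \<pi> \<longrightarrow> (\<forall>\<tau>. length \<tau> = H \<longrightarrow>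
            g1 i \<pi> \<tau> \<le> traj_prob f \<pi> \<tau> \<and> traj_prob f \<pi> \<tau> \<le> g2 i \<pi> \<tau>)))"

(* bracket number N_F(eps) (\<infinity> if no finite bracket exists) *)
definition bracket_number :: "nat \<Rightarrow> ('ob,'a::finite) model set \<Rightarrow> real \<Rightarrow> enat" where
  "bracket_number H F \<epsilon> = Inf {enat N | N. has_bracket H F \<epsilon> N}"

(* there is a set of n parameter tuples {m'_{(ob,a,u),h}, q'_0} eps-covering F *)
definition has_cover :: "nat \<Rightarrow> (nat \<Rightarrow> ('ob,'a) test set) \<Rightarrow> ('ob::finite,'a::finite) model set \<Rightarrow> real \<Rightarrow> nat \<Rightarrow> bool" where
  "has_cover H U F \<epsilon> n \<longleftrightarrow>
     (\<exists>(M' :: nat \<Rightarrow> 'ob \<Rightarrow> 'a \<Rightarrow> nat \<Rightarrow> ('ob,'a) test \<Rightarrow> ('ob,'a) test \<Rightarrow> real)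
        (Q' :: nat \<Rightarrow> ('ob,'a) test \<Rightarrow> real).
        \<forall>f\<in>F. \<exists>i<n.
          (\<forall>ob a. \<forall>h\<in>{1..H-1}. \<forall>u\<in>U (h+1). \<forall>v\<in>U h.
              \<bar>m_vec H U f h (ext_test ob a u) v - M' i ob a h u v\<bar> \<le> \<epsilon>) \<and>
          (\<forall>v\<in>U 1. \<bar>test_prob f [] v - Q' i v\<bar> \<le> \<epsilon>))"

(* covering number Z_F(eps) (\<infinity> if no finite cover exists) *)
definition covering_number :: "nat \<Rightarrow> (nat \<Rightarrow> ('ob,'a) test set) \<Rightarrow> ('ob::finite,'a::finite) model set \<Rightarrow> real \<Rightarrow> enat" where
  "covering_number H U F \<epsilon> = Inf {enat n | n. has_cover H U F \<epsilon> n}"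

definition card_U :: "nat \<Rightarrow> (nat \<Rightarrow> ('ob,'a) test set) \<Rightarrow> nat" where
  "card_U H U = Max ((\<lambda>h. card (U h)) ` {1..H})"

definition card_UA :: "nat \<Rightarrow> (nat \<Rightarrow> ('ob,'a) test set) \<Rightarrow> nat" where
  "card_UA H U = Max ((\<lambda>h. card (snd ` U h)) ` {1..H})"

definition psr_class :: "nat \<Rightarrow> (nat \<Rightarrow> ('ob,'a) test set) \<Rightarrow> real \<Rightarrow> ('ob::finite,'a::finite) model set \<Rightarrow> bool" where
  "psr_class H U \<alpha> F \<longleftrightarrow>
     (\<forall>f\<in>F. valid_model H f \<and> core_tests H U f \<and>
        (\<forall>h\<in>{0..H-1}. core_matrix_bound H U f h (1/\<alpha>))) \<and>
     (\<forall>ob. ([ob], []) \<in> U H)"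

end

(* Write P_f(tau) for the probability that model f produces the observations of tau when the
   actions of tau are played. Two models that are delta-close to the same cover element have PSR
   parameters m_{(o,a,u),h} and q_0 differing by at most 2 delta. Comparing the hybrid processes
   that follow g for the first k steps and f afterwards telescopes P_f(tau) - P_g(tau) into H
   terms, each pairing an f-suffix weight e_{o_H}^T M_{H-1} ... M_{h+1} with a parameter
   difference applied to an unnormalised predictive state of g. A suffix weight lies in the
   column space of the core matrix K, and its inner products with the columns of K are
   conditional probabilities, hence at most 1; through the pseudo-inverse it therefore pairs
   with any vector x to at most |x|_1 / alpha. Unnormalised predictive states have l1-norm at
   most |U_A|, so |P_f(tau) - P_g(tau)| <= 2 H delta |U| |U_A| / alpha. Brackets of this
   half-width (times the policy probability) around one model per cover element have total
   width at most epsilon over the (|O||A|)^H trajectories. *)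

theory Submission
  imports Defs
begin

lemma finite_lists_length_UNIV: "finite {xs::'b::finite list. length xs = n}"
  using finite_lists_length_eq[of "UNIV::'b set" n] by simp

lemma card_lists_length_UNIV: "card {xs::'b::finite list. length xs = n} = CARD('b) ^ n"
  using card_lists_length_eq[of "UNIV::'b set" n] by simp

lemma sum_lists_length_Suc:
  "(\<Sum>xs\<in>{xs::'b::finite list. length xs = Suc n}. g xs) = (\<Sum>x\<in>UNIV. \<Sum>xs\<in>{xs. length xs = n}. g (x # xs))"
proof -
  have split: "{xs::'b list. length xs = Suc n} = (\<lambda>(x, xs). x # xs) ` (UNIV \<times> {xs. length xs = n})"
    by (auto simp: length_Suc_conv image_iff)
  have "inj_on (\<lambda>(x::'b, xs). x # xs) (UNIV \<times> {xs. length xs = n})"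
    by (auto simp: inj_on_def)
  then have "(\<Sum>xs\<in>{xs::'b list. length xs = Suc n}. g xs) = (\<Sum>(x, xs)\<in>UNIV \<times> {xs. length xs = n}. g (x # xs))"
    unfolding split by (simp add: sum.reindex case_prod_unfold)
  then show ?thesis
    by (simp add: sum.cartesian_product)
qed

lemma reach_prob_Nil [simp]: "reach_prob f [] = 1"
  by (simp add: reach_prob_def)

lemma reach_prob_snoc: "reach_prob f (\<tau> @ [x]) = reach_prob f \<tau> * f \<tau> (fst x)"
proof -
  have "(\<Prod>i<length \<tau>. f (take i (\<tau> @ [x])) (fst ((\<tau> @ [x]) ! i))) = reach_prob f \<tau>"
    unfolding reach_prob_def by (rule prod.cong) (auto simp: nth_append)
  then show ?thesis
    by (simp add: reach_prob_def)
qed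

lemma valid_model_nonneg: "valid_model H f \<Longrightarrow> length \<tau> < H \<Longrightarrow> 0 \<le> f \<tau> ob"
  unfolding valid_model_def by auto

lemma valid_model_le_one:
  assumes "valid_model H f" "length \<tau> < H"
  shows "f \<tau> ob \<le> 1"
proof -
  have "f \<tau> ob \<le> (\<Sum>x\<in>UNIV. f \<tau> x)"
    by (rule member_le_sum) (use assms in \<open>auto simp: valid_model_nonneg\<close>)
  then show ?thesis
    using assms unfolding valid_model_def by auto
qed

lemma reach_prob_append_bounds:
  assumes "valid_model H f" "length (\<tau> @ \<omega>) \<le> H"
  shows "0 \<le> reach_prob f (\<tau> @ \<omega>) \<and> reach_prob f (\<tau> @ \<omega>) \<le> reach_prob f \<tau>"
  using assms(2)
proof (induction \<omega> rule: rev_induct)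
  case Nil
  then show ?case
    unfolding reach_prob_def using assms(1)
    by (auto intro!: prod_nonneg valid_model_nonneg simp: less_le_trans)
next
  case (snoc x \<omega>)
  then have "length (\<tau> @ \<omega>) < H" by simp
  then have "0 \<le> f (\<tau> @ \<omega>) (fst x)" "f (\<tau> @ \<omega>) (fst x) \<le> 1"
    using assms(1) valid_model_nonneg valid_model_le_one by blast+
  moreover have "0 \<le> reach_prob f (\<tau> @ \<omega>)" "reach_prob f (\<tau> @ \<omega>) \<le> reach_prob f \<tau>"
    using snoc by auto
  ultimately show ?case
    using reach_prob_snoc[of f "\<tau> @ \<omega>" x] mult_left_le[of "f (\<tau> @ \<omega>) (fst x)" "reach_prob f (\<tau> @ \<omega>)"]
    by simp
qed

lemma reach_prob_bounds:
  assumes "valid_model H f" "length \<tau> \<le> H"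
  shows "0 \<le> reach_prob f \<tau>" "reach_prob f \<tau> \<le> 1"
  using reach_prob_append_bounds[OF assms(1), of "[]" \<tau>] assms(2) by auto

lemma exists_reach_prob_pos:
  assumes "valid_model H f" "n \<le> H"
  shows "\<exists>\<tau>::('o::finite, 'a) hist. length \<tau> = n \<and> 0 < reach_prob f \<tau>"
  using assms(2)
proof (induction n)
  case 0
  show ?case by (intro exI[of _ "[]"]) simp
next
  case (Suc n)
  then obtain \<tau> where \<tau>: "length \<tau> = n" "0 < reach_prob f \<tau>" by auto
  have "(\<Sum>x\<in>UNIV. f \<tau> x) = 1" "\<forall>x. 0 \<le> f \<tau> x"
    using assms(1) Suc.prems \<tau>(1) unfolding valid_model_def by auto
  then obtain x where "0 < f \<tau> x"
    by (metis less_eq_real_def sum.neutral zero_neq_one)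
  then show ?case
    using \<tau> by (intro exI[of _ "\<tau> @ [(x, undefined)]"]) (simp add: reach_prob_snoc)
qed

fun seq_prob :: "('o, 'a) model \<Rightarrow> ('o, 'a) hist \<Rightarrow> 'o list \<Rightarrow> 'a list \<Rightarrow> real" where
  "seq_prob f \<tau> [] acts = 1"
| "seq_prob f \<tau> (ob # obs) acts = f \<tau> ob * seq_prob f (\<tau> @ [(ob, hd acts)]) obs (tl acts)"

lemma prod_eq_seq_prob:
  "length obs \<le> length acts + 1 \<Longrightarrow>
   (\<Prod>i<length obs. f (\<tau> @ zip (take i obs) (take i acts)) (obs ! i)) = seq_prob f \<tau> obs acts"
proof (induction obs arbitrary: \<tau> acts)
  case Nil
  then show ?case by simp
next
  case (Cons ob obs)
  show ?case
  proof (cases obs)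
    case Nil
    then show ?thesis by simp
  next
    case (Cons ob' obs')
    then obtain a acts' where acts: "acts = a # acts'"
      using Cons.prems by (cases acts) auto
    have "(\<Prod>i<length (ob # obs). f (\<tau> @ zip (take i (ob # obs)) (take i acts)) ((ob # obs) ! i))
        = f \<tau> ob * (\<Prod>i<length obs. f ((\<tau> @ [(ob, a)]) @ zip (take i obs) (take i acts')) (obs ! i))"
      by (simp add: prod.lessThan_Suc_shift acts del: prod.lessThan_Suc)
    also have "\<dots> = f \<tau> ob * seq_prob f (\<tau> @ [(ob, a)]) obs acts'"
      using Cons.IH[of acts' "\<tau> @ [(ob, a)]"] Cons.prems acts by simp
    finally show ?thesis
      by (simp add: acts)
  qed
qed

lemma test_prob_eq_seq_prob:
  "length (fst t) \<le> length (snd t) + 1 \<Longrightarrow>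
   test_prob f \<tau> t = (if reach_prob f \<tau> = 0 then 0 else seq_prob f \<tau> (fst t) (snd t))"
  unfolding test_prob_def using prod_eq_seq_prob[of "fst t" "snd t"] by simp

lemma seq_prob_bounds:
  assumes "valid_model H f" "length \<tau> + length obs \<le> H"
  shows "0 \<le> seq_prob f \<tau> obs acts \<and> seq_prob f \<tau> obs acts \<le> 1"
  using assms(2)
proof (induction obs arbitrary: \<tau> acts)
  case Nil
  then show ?case by simp
next
  case (Cons ob obs)
  have "0 \<le> seq_prob f (\<tau> @ [(ob, hd acts)]) obs (tl acts)"
       "seq_prob f (\<tau> @ [(ob, hd acts)]) obs (tl acts) \<le> 1"
    using Cons.IH[of "\<tau> @ [(ob, hd acts)]" "tl acts"] Cons.prems by auto
  moreover have "0 \<le> f \<tau> ob" "f \<tau> ob \<le> 1"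
    using valid_model_nonneg[OF assms(1)] valid_model_le_one[OF assms(1)] Cons.prems by auto
  ultimately show ?case
    by (simp add: mult_le_one)
qed

lemma sum_seq_prob:
  assumes "valid_model H f" "length \<tau> + n \<le> H"
  shows "(\<Sum>obs\<in>{obs. length obs = n}. seq_prob f \<tau> obs acts) = 1"
  using assms(2)
proof (induction n arbitrary: \<tau> acts)
  case 0
  have "{obs::'a list. length obs = 0} = {[]}" by auto
  then show ?case by simp
next
  case (Suc n)
  have "(\<Sum>obs\<in>{obs. length obs = Suc n}. seq_prob f \<tau> obs acts)
      = (\<Sum>x\<in>UNIV. f \<tau> x * (\<Sum>xs\<in>{xs. length xs = n}. seq_prob f (\<tau> @ [(x, hd acts)]) xs (tl acts)))"
    by (simp add: sum_lists_length_Suc sum_distrib_left)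
  also have "\<dots> = (\<Sum>x\<in>UNIV. f \<tau> x)"
    using Suc.IH Suc.prems by simp
  also have "\<dots> = 1"
    using assms(1) Suc.prems unfolding valid_model_def by auto
  finally show ?case .
qed

lemma test_prob_bounds:
  assumes "valid_model H f" "length \<tau> + length (fst t) \<le> H" "length (fst t) \<le> length (snd t) + 1"
  shows "0 \<le> test_prob f \<tau> t" "test_prob f \<tau> t \<le> 1"
  using seq_prob_bounds[OF assms(1,2), of "snd t"] test_prob_eq_seq_prob[OF assms(3)] by auto

lemma sum_test_prob_same_actions:
  assumes "valid_model H f" "length \<tau> + length acts + 1 \<le> H" "finite S"
    and "\<forall>v\<in>S. snd v = acts \<and> length (fst v) = length acts + 1"
  shows "(\<Sum>v\<in>S. test_prob f \<tau> v) \<le> 1"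
proof -
  have "inj_on fst S"
    using assms(4) by (auto simp: inj_on_def prod_eq_iff)
  then have "(\<Sum>v\<in>S. test_prob f \<tau> v) = (\<Sum>obs\<in>fst ` S. test_prob f \<tau> (obs, acts))"
    using assms(4) by (subst sum.reindex) (auto intro!: sum.cong simp: prod_eq_iff)
  also have "\<dots> \<le> (\<Sum>obs\<in>{obs. length obs = length acts + 1}. test_prob f \<tau> (obs, acts))"
    using assms finite_lists_length_UNIV test_prob_bounds(1)[OF assms(1)]
    by (intro sum_mono2) auto
  also have "\<dots> = (if reach_prob f \<tau> = 0 then 0
                   else (\<Sum>obs\<in>{obs. length obs = length acts + 1}. seq_prob f \<tau> obs acts))"
    by (auto simp: test_prob_eq_seq_prob)
  also have "\<dots> \<le> 1"
    using sum_seq_prob[OF assms(1)] assms(2) by simp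
  finally show ?thesis .
qed

lemma sum_test_prob_le_card_actions:
  assumes "valid_model H f" "finite S" "\<forall>v\<in>S. is_test H h v" "length \<tau> = h - 1"
  shows "(\<Sum>v\<in>S. test_prob f \<tau> v) \<le> card (snd ` S)"
proof -
  have "(\<Sum>v\<in>S. test_prob f \<tau> v) = (\<Sum>acts\<in>snd ` S. \<Sum>v\<in>{v\<in>S. snd v = acts}. test_prob f \<tau> v)"
    using assms(2) by (rule sum.image_gen)
  also have "\<dots> \<le> (\<Sum>acts\<in>snd ` S. 1)"
    using assms unfolding is_test_def
    by (intro sum_mono sum_test_prob_same_actions[OF assms(1)]) auto
  finally show ?thesis by simp
qed

lemma reach_prob_test_prob_snoc:
  assumes "length (fst u) \<le> length (snd u) + 1"
  shows "reach_prob f (\<tau> @ [(ob, a)]) * test_prob f (\<tau> @ [(ob, a)]) u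
       = reach_prob f \<tau> * test_prob f \<tau> (ext_test ob a u)"
  using assms
  by (simp add: test_prob_eq_seq_prob ext_test_def reach_prob_snoc)

section \<open>Pseudo-inverses\<close>

lemma sum_mult_matrix_assoc:
  "(\<Sum>r\<in>R. w r * (\<Sum>i\<in>I. K r i * y i)) = (\<Sum>i\<in>I. (\<Sum>r\<in>R. w r * K r i) * (y i :: real))"
  unfolding sum_distrib_left sum_distrib_right mult.assoc by (rule sum.swap)

lemma pinv_fixes_col_space:
  assumes "is_pinv R d K X" "finite R" "\<forall>r\<in>R. x r = (\<Sum>j<d. K r j * b j)" "r \<in> R"
  shows "x r = (\<Sum>i<d. K r i * (\<Sum>s\<in>R. X i s * x s))"
proof -
  have KXK: "\<forall>r\<in>R. \<forall>j<d. (\<Sum>s\<in>R. (\<Sum>i<d. K r i * X i s) * K s j) = K r j"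
    using assms(1) unfolding is_pinv_def Let_def by auto
  have "x r = (\<Sum>j<d. (\<Sum>s\<in>R. (\<Sum>i<d. K r i * X i s) * K s j) * b j)"
    using assms(3,4) KXK by simp
  also have "\<dots> = (\<Sum>s\<in>R. (\<Sum>i<d. K r i * X i s) * x s)"
    using assms(3) by (simp add: sum_mult_matrix_assoc)
  also have "\<dots> = (\<Sum>i<d. K r i * (\<Sum>s\<in>R. X i s * x s))"
    by (simp add: sum_distrib_left sum_distrib_right mult.assoc) (rule sum.swap)
  finally show ?thesis .
qed

lemma pinv_fixes_col_space_left:
  assumes "is_pinv R d K X" "finite R" "\<forall>r\<in>R. w r = (\<Sum>j<d. K r j * b j)" "r \<in> R"
  shows "w r = (\<Sum>i<d. (\<Sum>s\<in>R. w s * K s i) * X i r)"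
proof -
  have KX_sym: "\<forall>r\<in>R. \<forall>s\<in>R. (\<Sum>i<d. K r i * X i s) = (\<Sum>i<d. K s i * X i r)"
    using assms(1) unfolding is_pinv_def Let_def by auto
  have "(\<Sum>i<d. (\<Sum>s\<in>R. w s * K s i) * X i r) = (\<Sum>s\<in>R. w s * (\<Sum>i<d. K s i * X i r))"
    by (simp add: sum_mult_matrix_assoc)
  also have "\<dots> = (\<Sum>s\<in>R. w s * (\<Sum>i<d. K r i * X i s))"
    using KX_sym assms(4) by (intro sum.cong) auto
  also have "\<dots> = (\<Sum>i<d. K r i * (\<Sum>s\<in>R. X i s * w s))"
    unfolding sum_distrib_left by (subst sum.swap) (simp add: mult_ac)
  also have "\<dots> = w r"
    using pinv_fixes_col_space[OF assms] by simp
  finally show ?thesis by simp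
qed

lemma pinv_inner_factor:
  assumes "is_pinv R d K X" "finite R"
    and "(\<forall>r\<in>R. x r = (\<Sum>j<d. K r j * b j)) \<or> (\<forall>r\<in>R. w r = (\<Sum>j<d. K r j * b j))"
  shows "(\<Sum>r\<in>R. w r * x r) = (\<Sum>i<d. (\<Sum>r\<in>R. w r * K r i) * (\<Sum>s\<in>R. X i s * x s))"
  using assms(3)
proof
  assume col: "\<forall>r\<in>R. x r = (\<Sum>j<d. K r j * b j)"
  have "(\<Sum>r\<in>R. w r * x r) = (\<Sum>r\<in>R. w r * (\<Sum>i<d. K r i * (\<Sum>s\<in>R. X i s * x s)))"
  proof (rule sum.cong[OF refl])
    fix r assume "r \<in> R"
    then have "x r = (\<Sum>i<d. K r i * (\<Sum>s\<in>R. X i s * x s))"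
      by (rule pinv_fixes_col_space[OF assms(1,2) col])
    then show "w r * x r = w r * (\<Sum>i<d. K r i * (\<Sum>s\<in>R. X i s * x s))"
      by simp
  qed
  then show ?thesis
    by (simp add: sum_mult_matrix_assoc)
next
  assume col: "\<forall>r\<in>R. w r = (\<Sum>j<d. K r j * b j)"
  have "(\<Sum>r\<in>R. w r * x r) = (\<Sum>r\<in>R. (\<Sum>i<d. (\<Sum>s\<in>R. w s * K s i) * X i r) * x r)"
  proof (rule sum.cong[OF refl])
    fix r assume "r \<in> R"
    then have "w r = (\<Sum>i<d. (\<Sum>s\<in>R. w s * K s i) * X i r)"
      by (rule pinv_fixes_col_space_left[OF assms(1,2) col])
    then show "w r * x r = (\<Sum>i<d. (\<Sum>s\<in>R. w s * K s i) * X i r) * x r"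
      by simp
  qed
  also have "\<dots> = (\<Sum>i<d. \<Sum>r\<in>R. (\<Sum>s\<in>R. w s * K s i) * (X i r * x r))"
    unfolding sum_distrib_right[of _ "{..<d}"] by (subst sum.swap) (simp add: mult.assoc)
  finally show ?thesis
    by (simp add: sum_distrib_left)
qed

lemma abs_sum_mult_le_norm11:
  assumes "norm11_le R d X c" "finite R" "\<forall>i<d. \<bar>a i\<bar> \<le> 1"
  shows "\<bar>\<Sum>i<d. a i * (\<Sum>r\<in>R. X i r * x r)\<bar> \<le> c * (\<Sum>r\<in>R. \<bar>x r\<bar>)"
proof -
  have "\<bar>\<Sum>r\<in>R. X i r * x r\<bar> \<le> (\<Sum>r\<in>R. \<bar>X i r\<bar> * \<bar>x r\<bar>)" for i
    using sum_abs[of "\<lambda>r. X i r * x r" R] by (simp add: abs_mult)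
  then have "\<bar>\<Sum>i<d. a i * (\<Sum>r\<in>R. X i r * x r)\<bar> \<le> (\<Sum>i<d. \<bar>a i\<bar> * (\<Sum>r\<in>R. \<bar>X i r\<bar> * \<bar>x r\<bar>))"
    by (intro order.trans[OF sum_abs] sum_mono) (simp add: abs_mult mult_left_mono)
  also have "\<dots> \<le> (\<Sum>i<d. (\<Sum>r\<in>R. \<bar>X i r\<bar> * \<bar>x r\<bar>))"
    using assms(3) by (intro sum_mono mult_left_le_one_le sum_nonneg) auto
  also have "\<dots> = (\<Sum>r\<in>R. \<bar>x r\<bar> * (\<Sum>i<d. \<bar>X i r\<bar>))"
    by (subst sum.swap) (simp add: sum_distrib_left mult.commute)
  also have "\<dots> \<le> (\<Sum>r\<in>R. \<bar>x r\<bar> * c)"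
    using assms(1) unfolding norm11_le_def by (intro sum_mono mult_left_mono) auto
  finally show ?thesis
    by (simp add: sum_distrib_left mult.commute)
qed

lemma abs_inner_le_pinv_norm11:
  assumes "is_pinv R d K X" "norm11_le R d X c" "finite R"
    and "(\<forall>r\<in>R. x r = (\<Sum>j<d. K r j * b j)) \<or> (\<forall>r\<in>R. w r = (\<Sum>j<d. K r j * b j))"
    and "\<forall>j<d. \<bar>\<Sum>r\<in>R. w r * K r j\<bar> \<le> 1"
  shows "\<bar>\<Sum>r\<in>R. w r * x r\<bar> \<le> c * (\<Sum>r\<in>R. \<bar>x r\<bar>)"
  unfolding pinv_inner_factor[OF assms(1,3,4)]
  by (rule abs_sum_mult_le_norm11[OF assms(2,3)]) (use assms(5) in auto)

lemma span_in_col_space: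
  fixes B :: "'s \<Rightarrow> nat \<Rightarrow> real"
  assumes "\<forall>s\<in>S. \<forall>v\<in>R. q s v = (\<Sum>j<d. K v j * B s j)"
    and "\<forall>v\<in>R. w v = (\<Sum>s\<in>S. c s * q s v)"
  shows "\<forall>v\<in>R. w v = (\<Sum>j<d. K v j * (\<Sum>s\<in>S. c s * B s j))"
proof
  fix v assume "v \<in> R"
  then have "w v = (\<Sum>s\<in>S. c s * (\<Sum>j<d. K v j * B s j))"
    using assms by (auto intro!: sum.cong)
  also have "\<dots> = (\<Sum>j<d. K v j * (\<Sum>s\<in>S. c s * B s j))"
    unfolding sum_distrib_left by (subst sum.swap) (simp add: mult_ac)
  finally show "w v = (\<Sum>j<d. K v j * (\<Sum>s\<in>S. c s * B s j))" .
qed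

lemma span_orthogonal_zero:
  fixes z :: "'t \<Rightarrow> real"
  assumes "finite R" "\<forall>v\<in>R. z v = (\<Sum>s\<in>S. c s * q s v)" "\<forall>s\<in>S. (\<Sum>v\<in>R. z v * q s v) = 0"
  shows "\<forall>v\<in>R. z v = 0"
proof -
  have "(\<Sum>v\<in>R. z v * z v) = (\<Sum>v\<in>R. z v * (\<Sum>s\<in>S. c s * q s v))"
    using assms(2) by (intro sum.cong) auto
  also have "\<dots> = (\<Sum>s\<in>S. c s * (\<Sum>v\<in>R. z v * q s v))"
    unfolding sum_distrib_left by (subst sum.swap) (simp add: mult_ac)
  also have "\<dots> = 0"
    using assms(3) by simp
  finally show ?thesis
    using assms(1) sum_nonneg_eq_0_iff[of R "\<lambda>v. z v * z v"] by auto
qed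

section \<open>Core coefficient vectors\<close>

lemma core_matrix_bound_pinv:
  assumes "core_matrix_bound H U f h c"
  obtains d T X where "\<forall>j<d. length (T j) = h"
    "is_pinv (U (h+1)) d (\<lambda>u j. test_prob f (T j) u) X" "norm11_le (U (h+1)) d X c"
    "\<forall>\<tau>. length \<tau> = h \<longrightarrow>
        (\<exists>b. \<forall>u\<in>U (h+1). test_prob f \<tau> u = (\<Sum>j<d. test_prob f (T j) u * b j))"
proof (cases "h = 0")
  case True
  then obtain X where "is_pinv (U 1) 1 (\<lambda>u j. test_prob f [] u) X" "norm11_le (U 1) 1 X c"
    using assms unfolding core_matrix_bound_def by auto
  moreover have "\<exists>b. \<forall>u\<in>U 1. test_prob f [] u = (\<Sum>j<(1::nat). test_prob f [] u * b j)"
    by (intro exI[of _ "\<lambda>_. 1"]) simp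
  ultimately show ?thesis
    using True that[of 1 "\<lambda>_. []" X] by simp
next
  case False
  then obtain \<tau>s X where "\<forall>\<tau>\<in>set \<tau>s. length \<tau> = h"
     and span: "\<forall>\<tau>. length \<tau> = h \<longrightarrow> (\<exists>a::nat \<Rightarrow> real. \<forall>u\<in>U (h+1).
               test_prob f \<tau> u = (\<Sum>i<length \<tau>s. a i * test_prob f (\<tau>s ! i) u))"
     and "is_pinv (U (h+1)) (length \<tau>s) (\<lambda>u i. test_prob f (\<tau>s ! i) u) X"
     and "norm11_le (U (h+1)) (length \<tau>s) X c"
    using assms unfolding core_matrix_bound_def by auto
  moreover have "\<forall>\<tau>. length \<tau> = h \<longrightarrow> (\<exists>b. \<forall>u\<in>U (h+1).
      test_prob f \<tau> u = (\<Sum>j<length \<tau>s. test_prob f (\<tau>s ! j) u * b j))"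
    using span by (simp only: mult.commute)
  ultimately show ?thesis
    using that[of "length \<tau>s" "(!) \<tau>s" X] by simp
qed

definition is_core_coeffs ::
    "(nat \<Rightarrow> ('o, 'a) test set) \<Rightarrow> ('o, 'a) model \<Rightarrow> nat \<Rightarrow> ('o, 'a) test \<Rightarrow> (('o, 'a) test \<Rightarrow> real) \<Rightarrow> bool"
  where "is_core_coeffs U f h t m \<longleftrightarrow> (\<forall>v. v \<notin> U h \<longrightarrow> m v = 0) \<and>
      (\<exists>c. \<forall>v\<in>U h. m v = (\<Sum>\<tau>\<in>{\<tau>. length \<tau> = h - 1}. c \<tau> * test_prob f \<tau> v)) \<and>
      (\<forall>\<tau>. length \<tau> = h - 1 \<longrightarrow> test_prob f \<tau> t = (\<Sum>v\<in>U h. m v * test_prob f \<tau> v))"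

lemma m_vec_eq_The_core_coeffs: "m_vec H U f h t = (THE m. is_core_coeffs U f h t m)"
  unfolding m_vec_def is_core_coeffs_def ..

lemma core_tests_finite: "core_tests H U f \<Longrightarrow> 1 \<le> h \<Longrightarrow> h \<le> H \<Longrightarrow> finite (U h)"
  unfolding core_tests_def by auto

lemma core_tests_is_test: "core_tests H U f \<Longrightarrow> 1 \<le> h \<Longrightarrow> h \<le> H \<Longrightarrow> u \<in> U h \<Longrightarrow> is_test H h u"
  unfolding core_tests_def by auto

lemma core_tests_coeffs:
  "core_tests H U f \<Longrightarrow> 1 \<le> h \<Longrightarrow> h \<le> H \<Longrightarrow> is_test H h t \<Longrightarrow>
   \<exists>m. \<forall>\<tau>. length \<tau> = h - 1 \<longrightarrow> test_prob f \<tau> t = (\<Sum>u\<in>U h. m u * test_prob f \<tau> u)"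
  unfolding core_tests_def by (auto simp del: split_paired_All)

lemma core_coeffs_exist:
  fixes f :: "('o::finite, 'a::finite) model"
  assumes "core_tests H U f" "core_matrix_bound H U f (h-1) c" "1 \<le> h" "h \<le> H" "is_test H h t"
  shows "\<exists>m. is_core_coeffs U f h t m"
proof -
  have finU: "finite (U h)"
    using assms core_tests_finite by blast
  obtain m0 where m0: "\<forall>\<tau>. length \<tau> = h - 1 \<longrightarrow>
      test_prob f \<tau> t = (\<Sum>u\<in>U h. m0 u * test_prob f \<tau> u)"
    using core_tests_coeffs[OF assms(1,3,4,5)] by blast
  have hh: "h - 1 + 1 = h" using assms(3) by simp
  obtain d T X where T: "\<forall>j<d. length (T j) = h - 1"
    and pinv: "is_pinv (U h) d (\<lambda>u j. test_prob f (T j) u) X"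
    and spans: "\<forall>\<tau>. length \<tau> = h - 1 \<longrightarrow>
        (\<exists>b. \<forall>u\<in>U h. test_prob f \<tau> u = (\<Sum>j<d. test_prob f (T j) u * b j))"
    by (rule core_matrix_bound_pinv[OF assms(2), unfolded hh])
  text \<open>Project \<open>m0\<close> onto the column space of the core matrix \<open>K\<close>: since all predictive
    states lie in that space, \<open>K X m0\<close> has the same inner products with them as \<open>m0\<close>.\<close>
  define y where "y i = (\<Sum>s\<in>U h. X i s * m0 s)" for i
  define m where "m v = (if v \<in> U h then (\<Sum>i<d. test_prob f (T i) v * y i) else 0)" for v
  define cc where "cc \<tau> = (\<Sum>i | i \<in> {..<d} \<and> T i = \<tau>. y i)" for \<tau>
  have "\<forall>v\<in>U h. m v = (\<Sum>\<tau>\<in>{\<tau>. length \<tau> = h - 1}. cc \<tau> * test_prob f \<tau> v)"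
  proof
    fix v assume v: "v \<in> U h"
    have "(\<Sum>\<tau>\<in>{\<tau>. length \<tau> = h - 1}. cc \<tau> * test_prob f \<tau> v)
        = (\<Sum>\<tau>\<in>{\<tau>. length \<tau> = h - 1}. \<Sum>i | i \<in> {..<d} \<and> T i = \<tau>. test_prob f (T i) v * y i)"
      unfolding cc_def sum_distrib_right by (intro sum.cong) (auto simp: mult.commute)
    also have "\<dots> = (\<Sum>i<d. test_prob f (T i) v * y i)"
      using T by (intro sum.group) (auto simp: finite_lists_length_UNIV)
    finally show "m v = (\<Sum>\<tau>\<in>{\<tau>. length \<tau> = h - 1}. cc \<tau> * test_prob f \<tau> v)"
      using v by (simp add: m_def)
  qed
  moreover have "test_prob f \<tau> t = (\<Sum>v\<in>U h. m v * test_prob f \<tau> v)" if len: "length \<tau> = h - 1" for \<tau>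
  proof -
    obtain b where "\<forall>u\<in>U h. test_prob f \<tau> u = (\<Sum>j<d. test_prob f (T j) u * b j)"
      using spans len by blast
    then have "(\<Sum>u\<in>U h. test_prob f \<tau> u * m0 u)
        = (\<Sum>i<d. (\<Sum>r\<in>U h. test_prob f \<tau> r * test_prob f (T i) r) * y i)"
      unfolding y_def by (rule pinv_inner_factor[OF pinv finU disjI2])
    also have "\<dots> = (\<Sum>r\<in>U h. test_prob f \<tau> r * (\<Sum>i<d. test_prob f (T i) r * y i))"
      by (rule sum_mult_matrix_assoc[symmetric])
    also have "\<dots> = (\<Sum>v\<in>U h. m v * test_prob f \<tau> v)"
      unfolding m_def by (intro sum.cong) simp_all
    finally show ?thesis
      using m0 len by (simp add: mult.commute)
  qed
  moreover have "\<forall>v. v \<notin> U h \<longrightarrow> m v = 0"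
    by (simp add: m_def)
  ultimately show ?thesis
    unfolding is_core_coeffs_def by blast
qed

lemma core_coeffs_unique:
  assumes "finite (U h)" "is_core_coeffs U f h t m1" "is_core_coeffs U f h t m2"
  shows "m1 = m2"
proof
  fix v
  obtain c1 c2 where
    "\<forall>v\<in>U h. m1 v = (\<Sum>\<tau>\<in>{\<tau>. length \<tau> = h - 1}. c1 \<tau> * test_prob f \<tau> v)"
    "\<forall>v\<in>U h. m2 v = (\<Sum>\<tau>\<in>{\<tau>. length \<tau> = h - 1}. c2 \<tau> * test_prob f \<tau> v)"
    using assms(2,3) unfolding is_core_coeffs_def by blast
  then have "\<forall>v\<in>U h. m1 v - m2 v
      = (\<Sum>\<tau>\<in>{\<tau>. length \<tau> = h - 1}. (c1 \<tau> - c2 \<tau>) * test_prob f \<tau> v)"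
    by (simp add: left_diff_distrib sum_subtractf)
  moreover have "\<forall>\<tau>\<in>{\<tau>. length \<tau> = h - 1}. (\<Sum>v\<in>U h. (m1 v - m2 v) * test_prob f \<tau> v) = 0"
    using assms(2,3) unfolding is_core_coeffs_def by (simp add: left_diff_distrib sum_subtractf)
  ultimately have "\<forall>v\<in>U h. m1 v - m2 v = 0"
    by (rule span_orthogonal_zero[OF assms(1)])
  moreover have "v \<notin> U h \<Longrightarrow> m1 v = 0 \<and> m2 v = 0"
    using assms(2,3) unfolding is_core_coeffs_def by blast
  ultimately show "m1 v = m2 v"
    by (cases "v \<in> U h") auto
qed

lemma m_vec_is_core_coeffs:
  fixes f :: "('o::finite, 'a::finite) model"
  assumes "core_tests H U f" "core_matrix_bound H U f (h-1) c" "1 \<le> h" "h \<le> H" "is_test H h t"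
  shows "is_core_coeffs U f h t (m_vec H U f h t)"
proof -
  have "finite (U h)"
    using assms core_tests_finite by blast
  then have "\<exists>!m. is_core_coeffs U f h t m"
    using core_coeffs_exist[OF assms] core_coeffs_unique by blast
  then show ?thesis
    unfolding m_vec_eq_The_core_coeffs by (rule theI')
qed

lemma m_vec_in_span:
  fixes f :: "('o::finite, 'a::finite) model"
  assumes "core_tests H U f" "core_matrix_bound H U f (h-1) c" "1 \<le> h" "h \<le> H" "is_test H h t"
  shows "\<exists>cc. \<forall>v\<in>U h. m_vec H U f h t v = (\<Sum>\<tau>\<in>{\<tau>. length \<tau> = h - 1}. cc \<tau> * test_prob f \<tau> v)"
  using m_vec_is_core_coeffs[OF assms] unfolding is_core_coeffs_def by blast

lemma test_prob_eq_m_vec_inner: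
  fixes f :: "('o::finite, 'a::finite) model"
  assumes "core_tests H U f" "core_matrix_bound H U f (h-1) c" "1 \<le> h" "h \<le> H" "is_test H h t"
    and "length \<tau> = h - 1"
  shows "test_prob f \<tau> t = (\<Sum>v\<in>U h. m_vec H U f h t v * test_prob f \<tau> v)"
  using m_vec_is_core_coeffs[OF assms(1-5)] assms(6) unfolding is_core_coeffs_def by blast

definition psr_model :: "nat \<Rightarrow> (nat \<Rightarrow> ('o, 'a) test set) \<Rightarrow> real \<Rightarrow> ('o::finite, 'a::finite) model \<Rightarrow> bool"
  where "psr_model H U \<alpha> f \<longleftrightarrow> 1 \<le> H \<and> valid_model H f \<and> core_tests H U f \<and>
     (\<forall>h<H. core_matrix_bound H U f h (1/\<alpha>)) \<and> (\<forall>ob. ([ob], []) \<in> U H)"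

lemma psr_class_psr_model: "psr_class H U \<alpha> F \<Longrightarrow> 1 \<le> H \<Longrightarrow> f \<in> F \<Longrightarrow> psr_model H U \<alpha> f"
  unfolding psr_class_def psr_model_def by auto

lemma psr_modelD:
  assumes "psr_model H U \<alpha> f"
  shows psr_model_horizon: "1 \<le> H"
    and psr_model_valid: "valid_model H f"
    and psr_model_core_tests: "core_tests H U f"
    and psr_model_core_matrix_bound: "h < H \<Longrightarrow> core_matrix_bound H U f h (1/\<alpha>)"
    and psr_model_last_tests: "([ob], []) \<in> U H"
  using assms unfolding psr_model_def by auto

lemma psr_model_finite: "psr_model H U \<alpha> f \<Longrightarrow> 1 \<le> h \<Longrightarrow> h \<le> H \<Longrightarrow> finite (U h)"
  using core_tests_finite psr_model_core_tests by blast

lemma psr_model_is_test: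
  "psr_model H U \<alpha> f \<Longrightarrow> 1 \<le> h \<Longrightarrow> h \<le> H \<Longrightarrow> u \<in> U h \<Longrightarrow> is_test H h u"
  using core_tests_is_test psr_model_core_tests by blast

lemma psr_model_m_vec_in_span:
  assumes "psr_model H U \<alpha> f" "1 \<le> h" "h \<le> H" "is_test H h t"
  shows "\<exists>cc. \<forall>v\<in>U h. m_vec H U f h t v = (\<Sum>\<tau>\<in>{\<tau>. length \<tau> = h - 1}. cc \<tau> * test_prob f \<tau> v)"
  using assms by (intro m_vec_in_span[of H U f h "1/\<alpha>"])
    (auto simp: psr_model_core_tests psr_model_core_matrix_bound)

lemma psr_model_test_prob_eq_m_vec_inner:
  assumes "psr_model H U \<alpha> f" "1 \<le> h" "h \<le> H" "is_test H h t" "length \<tau> = h - 1"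
  shows "test_prob f \<tau> t = (\<Sum>v\<in>U h. m_vec H U f h t v * test_prob f \<tau> v)"
  using assms by (intro test_prob_eq_m_vec_inner[of H U f h "1/\<alpha>"])
    (auto simp: psr_model_core_tests psr_model_core_matrix_bound)

section \<open>Suffix weights\<close>

text \<open>\<open>joint_prob f \<tau>\<close> is the unnormalised predictive state \<open>P_f(\<tau>) q_{\<tau>;f}\<close>.\<close>
definition joint_prob :: "('o, 'a) model \<Rightarrow> ('o, 'a) hist \<Rightarrow> ('o, 'a) test \<Rightarrow> real"
  where "joint_prob f \<tau> v = reach_prob f \<tau> * test_prob f \<tau> v"

lemma joint_prob_snoc:
  assumes "psr_model H U \<alpha> f" "length \<tau> = h - 1" "1 \<le> h" "h < H" "u \<in> U (h+1)"
  shows "joint_prob f (\<tau> @ [(ob, a)]) u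
       = (\<Sum>v\<in>U h. m_vec H U f h (ext_test ob a u) v * joint_prob f \<tau> v)"
proof -
  have "is_test H (h+1) u"
    using psr_model_is_test[OF assms(1), of "h+1" u] assms(4,5) by simp
  then have u: "length (fst u) \<le> length (snd u) + 1" and ext: "is_test H h (ext_test ob a u)"
    using assms(3) unfolding is_test_def ext_test_def by auto
  have "test_prob f \<tau> (ext_test ob a u)
      = (\<Sum>v\<in>U h. m_vec H U f h (ext_test ob a u) v * test_prob f \<tau> v)"
    using psr_model_test_prob_eq_m_vec_inner[OF assms(1,3) _ ext assms(2)] assms(4) by simp
  then show ?thesis
    unfolding joint_prob_def reach_prob_test_prob_snoc[OF u]
    by (simp add: sum_distrib_left mult_ac)
qed

lemma joint_prob_nonneg:
  assumes "psr_model H U \<alpha> f" "length \<tau> = h - 1" "1 \<le> h" "h \<le> H" "v \<in> U h"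
  shows "0 \<le> joint_prob f \<tau> v"
proof -
  have vm: "valid_model H f"
    using assms(1) by (rule psr_model_valid)
  have "is_test H h v"
    using assms psr_model_is_test by blast
  then have "length \<tau> + length (fst v) \<le> H" "length (fst v) \<le> length (snd v) + 1"
    using assms(2,3) unfolding is_test_def by auto
  then show ?thesis
    unfolding joint_prob_def
    by (intro mult_nonneg_nonneg reach_prob_bounds(1)[OF vm] test_prob_bounds(1)[OF vm]) auto
qed

lemma sum_joint_prob_le_card_actions:
  assumes "psr_model H U \<alpha> f" "length \<tau> = h - 1" "1 \<le> h" "h \<le> H"
  shows "(\<Sum>v\<in>U h. joint_prob f \<tau> v) \<le> card (snd ` U h)"
proof -
  have vm: "valid_model H f"
    using assms(1) by (rule psr_model_valid)
  have tests: "\<forall>v\<in>U h. is_test H h v"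
    using assms psr_model_is_test by blast
  have reach: "0 \<le> reach_prob f \<tau>" "reach_prob f \<tau> \<le> 1"
    using reach_prob_bounds[OF vm] assms by auto
  have "(\<Sum>v\<in>U h. joint_prob f \<tau> v) = reach_prob f \<tau> * (\<Sum>v\<in>U h. test_prob f \<tau> v)"
    by (simp add: joint_prob_def sum_distrib_left)
  also have "\<dots> \<le> (\<Sum>v\<in>U h. test_prob f \<tau> v)"
    using reach tests test_prob_bounds(1)[OF vm] assms(2,3)
    by (intro mult_left_le_one_le sum_nonneg) (auto simp: is_test_def)
  also have "\<dots> \<le> card (snd ` U h)"
    using sum_test_prob_le_card_actions[OF vm psr_model_finite[OF assms(1,3,4)] tests assms(2)] .
  finally show ?thesis .
qed

text \<open>For a suffix \<open>\<omega> = (o_h, a_h, ..., o_H, a_H)\<close> starting at step \<open>h\<close>, the vector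
  \<open>suffix_weight H U f h \<omega>\<close> over \<open>U_h\<close> is the row vector
  \<open>e_{o_H}^T M_{o_{H-1},a_{H-1},H-1} ... M_{o_h,a_h,h}\<close> of the PSR product formula.\<close>
fun suffix_weight ::
    "nat \<Rightarrow> (nat \<Rightarrow> ('o, 'a) test set) \<Rightarrow> ('o::finite, 'a::finite) model \<Rightarrow> nat \<Rightarrow> ('o, 'a) hist \<Rightarrow> ('o, 'a) test \<Rightarrow> real"
  where
    "suffix_weight H U f h [] v = 0"
  | "suffix_weight H U f h [x] v = (if v = ([fst x], []) then 1 else 0)"
  | "suffix_weight H U f h (x # y # \<omega>) v =
      (\<Sum>u\<in>U (h+1). suffix_weight H U f (h+1) (y # \<omega>) u * m_vec H U f h (ext_test (fst x) (snd x) u) v)"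

lemma suffix_weight_Cons_inner:
  assumes "\<omega> \<noteq> []"
  shows "(\<Sum>v\<in>U h. suffix_weight H U f h (x # \<omega>) v * z v)
     = (\<Sum>u\<in>U (h+1). suffix_weight H U f (h+1) \<omega> u *
          (\<Sum>v\<in>U h. m_vec H U f h (ext_test (fst x) (snd x) u) v * z v))"
proof -
  obtain y \<omega>' where "\<omega> = y # \<omega>'"
    using assms by (cases \<omega>) auto
  then show ?thesis
    by (simp add: sum_distrib_left sum_distrib_right mult.assoc) (rule sum.swap)
qed

lemma sum_indicator_mult:
  assumes "finite S" "w \<in> S"
  shows "(\<Sum>v\<in>S. (if v = w then 1 else 0) * z v) = (z w :: real)"
  using assms by (simp add: if_distrib[of "\<lambda>c. c * z _"] cong: if_cong)

lemma reach_prob_append_eq_suffix_weight: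
  assumes "psr_model H U \<alpha> f"
  shows "\<omega> \<noteq> [] \<Longrightarrow> length \<tau> + length \<omega> = H \<Longrightarrow>
    reach_prob f (\<tau> @ \<omega>) = (\<Sum>v\<in>U (length \<tau> + 1). suffix_weight H U f (length \<tau> + 1) \<omega> v * joint_prob f \<tau> v)"
proof (induction \<omega> arbitrary: \<tau>)
  case Nil
  then show ?case by simp
next
  case (Cons x \<omega>)
  show ?case
  proof (cases "\<omega> = []")
    case True
    then have "length \<tau> + 1 = H"
      using Cons.prems by simp
    moreover have "reach_prob f (\<tau> @ [x]) = joint_prob f \<tau> ([fst x], [])"
      by (simp add: joint_prob_def reach_prob_snoc test_prob_eq_seq_prob)
    ultimately show ?thesis
      using True sum_indicator_mult[OF psr_model_finite[OF assms] psr_model_last_tests[OF assms]]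
        psr_model_horizon[OF assms] by simp
  next
    case False
    let ?h = "length \<tau> + 1"
    have "reach_prob f (\<tau> @ x # \<omega>)
        = (\<Sum>u\<in>U (?h + 1). suffix_weight H U f (?h + 1) \<omega> u * joint_prob f (\<tau> @ [(fst x, snd x)]) u)"
      using Cons.IH[of "\<tau> @ [x]"] Cons.prems False by simp
    also have "\<dots> = (\<Sum>u\<in>U (?h + 1). suffix_weight H U f (?h + 1) \<omega> u *
          (\<Sum>v\<in>U ?h. m_vec H U f ?h (ext_test (fst x) (snd x) u) v * joint_prob f \<tau> v))"
      using joint_prob_snoc[OF assms, of \<tau> ?h _ "fst x" "snd x"] Cons.prems False
      by (intro sum.cong) (auto simp: neq_Nil_conv)
    also have "\<dots> = (\<Sum>v\<in>U ?h. suffix_weight H U f ?h (x # \<omega>) v * joint_prob f \<tau> v)"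
      using False by (simp add: suffix_weight_Cons_inner)
    finally show ?thesis .
  qed
qed

lemma suffix_weight_in_span:
  assumes "psr_model H U \<alpha> f" "1 \<le> h" "h + length \<omega> = H + 1" "2 \<le> length \<omega>"
  shows "\<exists>cc. \<forall>v\<in>U h. suffix_weight H U f h \<omega> v = (\<Sum>\<tau>\<in>{\<tau>. length \<tau> = h - 1}. cc \<tau> * test_prob f \<tau> v)"
proof -
  obtain x y \<omega>' where \<omega>: "\<omega> = x # y # \<omega>'"
    using assms(4) by (cases \<omega>; cases "tl \<omega>") auto
  have "\<forall>u\<in>U (h+1). \<exists>c. \<forall>v\<in>U h. m_vec H U f h (ext_test (fst x) (snd x) u) v
      = (\<Sum>\<tau>\<in>{\<tau>. length \<tau> = h - 1}. c \<tau> * test_prob f \<tau> v)"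
  proof
    fix u assume "u \<in> U (h+1)"
    then have "is_test H (h+1) u"
      using psr_model_is_test[OF assms(1), of "h+1" u] assms(3) \<omega> by simp
    then have "is_test H h (ext_test (fst x) (snd x) u)"
      using assms(2) unfolding is_test_def ext_test_def by auto
    then show "\<exists>c. \<forall>v\<in>U h. m_vec H U f h (ext_test (fst x) (snd x) u) v
        = (\<Sum>\<tau>\<in>{\<tau>. length \<tau> = h - 1}. c \<tau> * test_prob f \<tau> v)"
      using psr_model_m_vec_in_span[OF assms(1,2)] assms(3) \<omega> by simp
  qed
  from bchoice[OF this] obtain C where C: "\<forall>u\<in>U (h+1). \<forall>v\<in>U h. m_vec H U f h (ext_test (fst x) (snd x) u) v
      = (\<Sum>\<tau>\<in>{\<tau>. length \<tau> = h - 1}. C u \<tau> * test_prob f \<tau> v)"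
    by blast
  define cc where "cc \<tau> = (\<Sum>u\<in>U (h+1). suffix_weight H U f (h+1) (y # \<omega>') u * C u \<tau>)" for \<tau>
  have "suffix_weight H U f h \<omega> v = (\<Sum>\<tau>\<in>{\<tau>. length \<tau> = h - 1}. cc \<tau> * test_prob f \<tau> v)"
    if v: "v \<in> U h" for v
  proof -
    have "suffix_weight H U f h \<omega> v = (\<Sum>u\<in>U (h+1). suffix_weight H U f (h+1) (y # \<omega>') u *
        (\<Sum>\<tau>\<in>{\<tau>. length \<tau> = h - 1}. C u \<tau> * test_prob f \<tau> v))"
      unfolding \<omega> suffix_weight.simps(3) using C v by (intro sum.cong) simp_all
    also have "\<dots> = (\<Sum>\<tau>\<in>{\<tau>. length \<tau> = h - 1}. cc \<tau> * test_prob f \<tau> v)"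
      unfolding cc_def by (rule sum_mult_matrix_assoc)
    finally show ?thesis .
  qed
  then show ?thesis
    by blast
qed

lemma abs_suffix_weight_inner_test_prob_le_1:
  assumes "psr_model H U \<alpha> f" "\<omega> \<noteq> []" "length \<tau> + length \<omega> = H"
  shows "\<bar>\<Sum>v\<in>U (length \<tau> + 1). suffix_weight H U f (length \<tau> + 1) \<omega> v * test_prob f \<tau> v\<bar> \<le> 1"
proof (cases "reach_prob f \<tau> = 0")
  case True
  then show ?thesis
    by (simp add: test_prob_def)
next
  case False
  define S where "S = (\<Sum>v\<in>U (length \<tau> + 1). suffix_weight H U f (length \<tau> + 1) \<omega> v * test_prob f \<tau> v)"
  text \<open>The inner product is the conditional probability of the suffix \<open>\<omega>\<close> given \<open>\<tau>\<close>.\<close>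
  have "reach_prob f (\<tau> @ \<omega>) = reach_prob f \<tau> * S"
    unfolding S_def reach_prob_append_eq_suffix_weight[OF assms]
    by (simp add: joint_prob_def sum_distrib_left mult_ac)
  moreover have "0 \<le> reach_prob f (\<tau> @ \<omega>)" "reach_prob f (\<tau> @ \<omega>) \<le> reach_prob f \<tau>"
    using reach_prob_append_bounds[OF psr_model_valid[OF assms(1)], of \<tau> \<omega>] assms(3) by auto
  ultimately have "0 \<le> S" "S \<le> 1"
    using False by (auto simp: zero_le_mult_iff mult_le_cancel_left1)
  then show ?thesis
    unfolding S_def by simp
qed

lemma psr_model_last_tests_eq:
  assumes "psr_model H U \<alpha> f"
  shows "U H = (\<lambda>ob. ([ob], [])) ` UNIV"
proof
  show "U H \<subseteq> (\<lambda>ob. ([ob], [])) ` UNIV"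
  proof
    fix u assume "u \<in> U H"
    then have "is_test H H u"
      using psr_model_is_test[OF assms] psr_model_horizon[OF assms] by blast
    then have "snd u = []" "length (fst u) = 1"
      unfolding is_test_def by auto
    then show "u \<in> (\<lambda>ob. ([ob], [])) ` UNIV"
      by (cases u) (auto simp: length_Suc_conv)
  qed
  show "(\<lambda>ob. ([ob], [])) ` UNIV \<subseteq> U H"
    using psr_model_last_tests[OF assms] by auto
qed

lemma sum_last_tests_test_prob:
  assumes "psr_model H U \<alpha> f" "length \<tau> = H - 1"
  shows "(\<Sum>r\<in>U H. test_prob f \<tau> r) = (if reach_prob f \<tau> = 0 then 0 else 1)"
proof -
  have "(\<Sum>r\<in>U H. test_prob f \<tau> r) = (\<Sum>ob\<in>UNIV. test_prob f \<tau> ([ob], []))"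
    unfolding psr_model_last_tests_eq[OF assms(1)] by (simp add: sum.reindex inj_on_def)
  also have "\<dots> = (if reach_prob f \<tau> = 0 then 0 else (\<Sum>ob\<in>UNIV. f \<tau> ob))"
    by (simp add: test_prob_eq_seq_prob)
  also have "\<dots> = (if reach_prob f \<tau> = 0 then 0 else 1)"
    using psr_model_valid[OF assms(1)] psr_model_horizon[OF assms(1)] assms(2)
    unfolding valid_model_def by auto
  finally show ?thesis .
qed

lemma psr_model_alpha_le_1:
  assumes "psr_model H U \<alpha> f" "0 < \<alpha>"
  shows "\<alpha> \<le> 1"
proof -
  have H1: "1 \<le> H" and vm: "valid_model H f"
    using assms(1) by (rule psr_model_horizon, rule psr_model_valid)
  have hh: "H - 1 + 1 = H"
    using H1 by simp
  have fin: "finite (U H)"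
    using psr_model_finite[OF assms(1) H1] by simp
  have "core_matrix_bound H U f (H - 1) (1/\<alpha>)"
    using psr_model_core_matrix_bound[OF assms(1)] H1 by simp
  then obtain d T X where T: "\<forall>j<d. length (T j) = H - 1"
    and pinv: "is_pinv (U H) d (\<lambda>u j. test_prob f (T j) u) X"
    and norm: "norm11_le (U H) d X (1/\<alpha>)"
    and spans: "\<forall>\<tau>. length \<tau> = H - 1 \<longrightarrow>
        (\<exists>b. \<forall>u\<in>U H. test_prob f \<tau> u = (\<Sum>j<d. test_prob f (T j) u * b j))"
    by (rule core_matrix_bound_pinv[where h = "H - 1", unfolded hh])
  text \<open>At the last step the all-ones vector pairs with every nonzero predictive state to
    exactly 1, so the pseudo-inverse bound for a reachable history yields \<open>1 \<le> 1/\<alpha>\<close>.\<close>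
  obtain \<tau> :: "('a, 'b) hist" where \<tau>: "length \<tau> = H - 1" "0 < reach_prob f \<tau>"
    using exists_reach_prob_pos[OF vm, of "H - 1"] by auto
  then obtain b where "\<forall>u\<in>U H. test_prob f \<tau> u = (\<Sum>j<d. test_prob f (T j) u * b j)"
    using spans by blast
  moreover have "\<forall>j<d. \<bar>\<Sum>r\<in>U H. 1 * test_prob f (T j) r\<bar> \<le> 1"
    using sum_last_tests_test_prob[OF assms(1)] T by simp
  ultimately have "\<bar>\<Sum>r\<in>U H. 1 * test_prob f \<tau> r\<bar> \<le> 1/\<alpha> * (\<Sum>r\<in>U H. \<bar>test_prob f \<tau> r\<bar>)"
    by (intro abs_inner_le_pinv_norm11[OF pinv norm fin]) auto
  moreover have "\<forall>r\<in>U H. 0 \<le> test_prob f \<tau> r"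
    unfolding psr_model_last_tests_eq[OF assms(1)] using \<tau> vm H1
    by (auto simp: test_prob_eq_seq_prob valid_model_nonneg)
  ultimately have "1 \<le> 1/\<alpha>"
    using sum_last_tests_test_prob[OF assms(1) \<tau>(1)] \<tau>(2) by simp
  then show ?thesis
    using assms(2) by (simp add: field_simps)
qed

lemma abs_suffix_weight_last_inner_le:
  assumes "psr_model H U \<alpha> f"
  shows "\<bar>\<Sum>v\<in>U H. suffix_weight H U f H [x] v * z v\<bar> \<le> (\<Sum>v\<in>U H. \<bar>z v\<bar>)"
proof -
  have fin: "finite (U H)"
    using psr_model_finite[OF assms] psr_model_horizon[OF assms] by simp
  have "\<bar>\<Sum>v\<in>U H. suffix_weight H U f H [x] v * z v\<bar> = \<bar>z ([fst x], [])\<bar>"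
    using sum_indicator_mult[OF fin psr_model_last_tests[OF assms]] by simp
  also have "\<dots> \<le> (\<Sum>v\<in>U H. \<bar>z v\<bar>)"
    using fin psr_model_last_tests[OF assms] by (intro member_le_sum) auto
  finally show ?thesis .
qed

lemma abs_suffix_weight_inner_le_long:
  assumes "psr_model H U \<alpha> f" "1 \<le> h" "h + length \<omega> = H + 1" "2 \<le> length \<omega>"
  shows "\<bar>\<Sum>v\<in>U h. suffix_weight H U f h \<omega> v * z v\<bar> \<le> 1/\<alpha> * (\<Sum>v\<in>U h. \<bar>z v\<bar>)"
proof -
  have ne: "\<omega> \<noteq> []" and hh: "h - 1 + 1 = h"
    using assms(2,4) by auto
  have fin: "finite (U h)"
    using psr_model_finite[OF assms(1,2)] assms(3,4) by simp
  have "core_matrix_bound H U f (h - 1) (1/\<alpha>)"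
    using psr_model_core_matrix_bound[OF assms(1)] assms(2-4) by simp
  then obtain d T X where T: "\<forall>j<d. length (T j) = h - 1"
    and pinv: "is_pinv (U h) d (\<lambda>u j. test_prob f (T j) u) X"
    and norm: "norm11_le (U h) d X (1/\<alpha>)"
    and spans: "\<forall>\<tau>. length \<tau> = h - 1 \<longrightarrow>
        (\<exists>b. \<forall>u\<in>U h. test_prob f \<tau> u = (\<Sum>j<d. test_prob f (T j) u * b j))"
    by (rule core_matrix_bound_pinv[where h = "h - 1", unfolded hh])
  obtain B where B: "\<forall>\<tau>. length \<tau> = h - 1 \<longrightarrow>
      (\<forall>u\<in>U h. test_prob f \<tau> u = (\<Sum>j<d. test_prob f (T j) u * B \<tau> j))"
    using spans by metis
  obtain cc where cc: "\<forall>v\<in>U h. suffix_weight H U f h \<omega> v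
      = (\<Sum>\<tau>\<in>{\<tau>. length \<tau> = h - 1}. cc \<tau> * test_prob f \<tau> v)"
    using suffix_weight_in_span[OF assms] by blast
  have "\<forall>r\<in>U h. suffix_weight H U f h \<omega> r
      = (\<Sum>j<d. test_prob f (T j) r * (\<Sum>\<tau>\<in>{\<tau>. length \<tau> = h - 1}. cc \<tau> * B \<tau> j))"
    by (rule span_in_col_space[OF _ cc]) (use B in simp)
  moreover have "\<forall>j<d. \<bar>\<Sum>r\<in>U h. suffix_weight H U f h \<omega> r * test_prob f (T j) r\<bar> \<le> 1"
  proof (intro allI impI)
    fix j assume "j < d"
    then have "length (T j) + 1 = h" "length (T j) + length \<omega> = H"
      using T assms(2,3) by auto
    then show "\<bar>\<Sum>r\<in>U h. suffix_weight H U f h \<omega> r * test_prob f (T j) r\<bar> \<le> 1"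
      using abs_suffix_weight_inner_test_prob_le_1[OF assms(1) ne, of "T j"] by simp
  qed
  ultimately show ?thesis
    by (intro abs_inner_le_pinv_norm11[OF pinv norm fin]) auto
qed

lemma abs_suffix_weight_inner_le:
  assumes "psr_model H U \<alpha> f" "0 < \<alpha>" "1 \<le> h" "h + length \<omega> = H + 1" "\<omega> \<noteq> []"
  shows "\<bar>\<Sum>v\<in>U h. suffix_weight H U f h \<omega> v * z v\<bar> \<le> 1/\<alpha> * (\<Sum>v\<in>U h. \<bar>z v\<bar>)"
proof (cases "length \<omega> = 1")
  case True
  then obtain x where "\<omega> = [x]" "h = H"
    using assms(4) by (cases \<omega>) auto
  moreover have "1 \<le> 1/\<alpha>"
    using psr_model_alpha_le_1[OF assms(1,2)] assms(2) by simp
  ultimately show ?thesis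
    using abs_suffix_weight_last_inner_le[OF assms(1), of x z]
      mult_right_mono[of 1 "1/\<alpha>" "\<Sum>v\<in>U H. \<bar>z v\<bar>"] by (simp add: sum_nonneg)
next
  case False
  then have "2 \<le> length \<omega>"
    using assms(5) by (cases \<omega>) (auto simp: Suc_le_eq)
  then show ?thesis
    by (rule abs_suffix_weight_inner_le_long[OF assms(1,3,4)])
qed

section \<open>Stability of trajectory probabilities\<close>

lemma card_le_card_U: "h \<in> {1..H} \<Longrightarrow> card (U h) \<le> card_U H U"
  unfolding card_U_def by (auto intro!: Max_ge)

lemma card_actions_le_card_UA: "h \<in> {1..H} \<Longrightarrow> card (snd ` U h) \<le> card_UA H U"
  unfolding card_UA_def by (auto intro!: Max_ge)

lemma psr_model_card_U_ge_1:
  assumes "psr_model H U \<alpha> f"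
  shows "1 \<le> card_U H U" "1 \<le> card_UA H U"
proof -
  have H: "H \<in> {1..H}"
    using psr_model_horizon[OF assms] by simp
  have "U H \<noteq> {}" "finite (U H)"
    using psr_model_last_tests[OF assms] psr_model_finite[OF assms] H by auto
  then have "1 \<le> card (U H)" "1 \<le> card (snd ` U H)"
    by (simp_all add: Suc_le_eq card_gt_0_iff)
  then show "1 \<le> card_U H U" "1 \<le> card_UA H U"
    using card_le_card_U[OF H, of U] card_actions_le_card_UA[OF H, of U] by linarith+
qed

definition psr_params_near ::
    "nat \<Rightarrow> (nat \<Rightarrow> ('o, 'a) test set) \<Rightarrow> real \<Rightarrow> ('o::finite, 'a::finite) model \<Rightarrow>
     ('o \<Rightarrow> 'a \<Rightarrow> nat \<Rightarrow> ('o, 'a) test \<Rightarrow> ('o, 'a) test \<Rightarrow> real) \<Rightarrow> (('o, 'a) test \<Rightarrow> real) \<Rightarrow> bool"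
  where "psr_params_near H U \<delta> f M Q \<longleftrightarrow>
     (\<forall>ob a. \<forall>h\<in>{1..H-1}. \<forall>u\<in>U (h+1). \<forall>v\<in>U h. \<bar>m_vec H U f h (ext_test ob a u) v - M ob a h u v\<bar> \<le> \<delta>) \<and>
     (\<forall>v\<in>U 1. \<bar>test_prob f [] v - Q v\<bar> \<le> \<delta>)"

lemma has_cover_iff:
  "has_cover H U F \<delta> n \<longleftrightarrow> (\<exists>M Q. \<forall>f\<in>F. \<exists>i<n. psr_params_near H U \<delta> f (M i) (Q i))"
  unfolding has_cover_def psr_params_near_def by simp

lemma psr_params_near_m_vec_diff:
  assumes "psr_params_near H U \<delta> f M Q" "psr_params_near H U \<delta> g M Q"
    and "h \<in> {1..H-1}" "u \<in> U (h+1)" "v \<in> U h"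
  shows "\<bar>m_vec H U f h (ext_test ob a u) v - m_vec H U g h (ext_test ob a u) v\<bar> \<le> 2 * \<delta>"
proof -
  have "\<bar>m_vec H U f h (ext_test ob a u) v - M ob a h u v\<bar> \<le> \<delta>"
       "\<bar>m_vec H U g h (ext_test ob a u) v - M ob a h u v\<bar> \<le> \<delta>"
    using assms unfolding psr_params_near_def by blast+
  then show ?thesis
    by linarith
qed

lemma psr_params_near_initial_diff:
  assumes "psr_params_near H U \<delta> f M Q" "psr_params_near H U \<delta> g M Q" "v \<in> U 1"
  shows "\<bar>test_prob f [] v - test_prob g [] v\<bar> \<le> 2 * \<delta>"
proof -
  have "\<bar>test_prob f [] v - Q v\<bar> \<le> \<delta>" "\<bar>test_prob g [] v - Q v\<bar> \<le> \<delta>"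
    using assms unfolding psr_params_near_def by blast+
  then show ?thesis
    by linarith
qed

lemma abs_sum_mult_nonneg_le:
  fixes d w :: "'t \<Rightarrow> real"
  assumes "\<forall>v\<in>S. \<bar>d v\<bar> \<le> c" "\<forall>v\<in>S. 0 \<le> w v"
  shows "\<bar>\<Sum>v\<in>S. d v * w v\<bar> \<le> c * (\<Sum>v\<in>S. w v)"
proof -
  have "\<bar>\<Sum>v\<in>S. d v * w v\<bar> \<le> (\<Sum>v\<in>S. \<bar>d v\<bar> * w v)"
    using sum_abs[of "\<lambda>v. d v * w v" S] assms(2) by (simp add: abs_mult)
  also have "\<dots> \<le> (\<Sum>v\<in>S. c * w v)"
    using assms by (intro sum_mono mult_right_mono) auto
  finally show ?thesis
    by (simp add: sum_distrib_left)
qed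

lemma suffix_weight_step_diff:
  assumes "psr_model H U \<alpha> g" "\<omega> \<noteq> []" "length \<sigma> = h - 1" "1 \<le> h" "h + length \<omega> = H"
  shows "(\<Sum>v\<in>U h. suffix_weight H U f h (x # \<omega>) v * joint_prob g \<sigma> v)
       - (\<Sum>u\<in>U (h+1). suffix_weight H U f (h+1) \<omega> u * joint_prob g (\<sigma> @ [x]) u)
     = (\<Sum>u\<in>U (h+1). suffix_weight H U f (h+1) \<omega> u *
          (\<Sum>v\<in>U h. (m_vec H U f h (ext_test (fst x) (snd x) u) v
                     - m_vec H U g h (ext_test (fst x) (snd x) u) v) * joint_prob g \<sigma> v))"
proof -
  have "h < H"
    using assms(2,5) by (cases \<omega>) auto
  then have "joint_prob g (\<sigma> @ [(fst x, snd x)]) u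
      = (\<Sum>v\<in>U h. m_vec H U g h (ext_test (fst x) (snd x) u) v * joint_prob g \<sigma> v)"
    if "u \<in> U (h+1)" for u
    using joint_prob_snoc[OF assms(1,3,4)] that by blast
  then show ?thesis
    unfolding suffix_weight_Cons_inner[OF assms(2)]
    by (simp add: sum_subtractf[symmetric] right_diff_distrib[symmetric] left_diff_distrib)
qed

lemma abs_suffix_weight_initial_diff_le:
  assumes "psr_model H U \<alpha> f" "psr_model H U \<alpha> g" "0 < \<alpha>" "0 \<le> \<delta>"
    and "psr_params_near H U \<delta> f M Q" "psr_params_near H U \<delta> g M Q" "length \<tau> = H"
  shows "\<bar>\<Sum>v\<in>U 1. suffix_weight H U f 1 \<tau> v * (joint_prob f [] v - joint_prob g [] v)\<bar>
    \<le> 2 * \<delta> * card_U H U * card_UA H U / \<alpha>"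
proof -
  have H1: "1 \<le> H"
    using psr_model_horizon[OF assms(1)] .
  have "\<bar>\<Sum>v\<in>U 1. suffix_weight H U f 1 \<tau> v * (joint_prob f [] v - joint_prob g [] v)\<bar>
      \<le> 1/\<alpha> * (\<Sum>v\<in>U 1. \<bar>joint_prob f [] v - joint_prob g [] v\<bar>)"
    using assms(7) H1 by (intro abs_suffix_weight_inner_le[OF assms(1,3)]) auto
  also have "\<dots> \<le> 1/\<alpha> * (\<Sum>v\<in>U 1. 2 * \<delta>)"
    using psr_params_near_initial_diff[OF assms(5,6)] assms(3)
    by (intro mult_left_mono sum_mono) (auto simp: joint_prob_def)
  also have "\<dots> \<le> 1/\<alpha> * (card_U H U * (2 * \<delta>) * card_UA H U)"
  proof -
    have "card (U 1) * (2 * \<delta>) \<le> card_U H U * (2 * \<delta>)"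
      using card_le_card_U[of 1 H U] H1 assms(4) by (intro mult_right_mono) auto
    also have "\<dots> \<le> card_U H U * (2 * \<delta>) * card_UA H U"
      using mult_left_mono[of 1 "card_UA H U" "card_U H U * (2 * \<delta>)"]
        psr_model_card_U_ge_1(2)[OF assms(1)] assms(4) by simp
    finally show ?thesis
      using assms(3) by (intro mult_left_mono) auto
  qed
  finally show ?thesis
    by (simp add: field_simps)
qed

lemma abs_suffix_weight_step_diff_le:
  assumes "psr_model H U \<alpha> f" "psr_model H U \<alpha> g" "0 < \<alpha>" "0 \<le> \<delta>"
    and "psr_params_near H U \<delta> f M Q" "psr_params_near H U \<delta> g M Q"
    and "\<omega> \<noteq> []" "length \<sigma> = h - 1" "1 \<le> h" "h + length \<omega> = H"
  shows "\<bar>\<Sum>u\<in>U (h+1). suffix_weight H U f (h+1) \<omega> u *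
          (\<Sum>v\<in>U h. (m_vec H U f h (ext_test ob a u) v - m_vec H U g h (ext_test ob a u) v)
                    * joint_prob g \<sigma> v)\<bar>
    \<le> 2 * \<delta> * card_U H U * card_UA H U / \<alpha>"
proof -
  define z where "z u = (\<Sum>v\<in>U h. (m_vec H U f h (ext_test ob a u) v - m_vec H U g h (ext_test ob a u) v)
                    * joint_prob g \<sigma> v)" for u
  have hH: "h \<in> {1..H-1}" "h + 1 \<in> {1..H}"
    using assms(7,9,10) by (cases \<omega>; auto)+
  have "\<bar>z u\<bar> \<le> 2 * \<delta> * card_UA H U" if "u \<in> U (h+1)" for u
  proof -
    have "\<bar>z u\<bar> \<le> 2 * \<delta> * (\<Sum>v\<in>U h. joint_prob g \<sigma> v)"
      unfolding z_def using hH that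
      by (intro abs_sum_mult_nonneg_le ballI psr_params_near_m_vec_diff[OF assms(5,6)]
          joint_prob_nonneg[OF assms(2,8,9)]) auto
    also have "\<dots> \<le> 2 * \<delta> * card_UA H U"
      using sum_joint_prob_le_card_actions[OF assms(2,8,9)] card_actions_le_card_UA[of h H U]
        hH assms(4) by (intro mult_left_mono) auto
    finally show ?thesis .
  qed
  then have "(\<Sum>u\<in>U (h+1). \<bar>z u\<bar>) \<le> card (U (h+1)) * (2 * \<delta> * card_UA H U)"
    using sum_mono[of "U (h+1)" "\<lambda>u. \<bar>z u\<bar>" "\<lambda>_. 2 * \<delta> * card_UA H U"] by simp
  also have "\<dots> \<le> card_U H U * (2 * \<delta> * card_UA H U)"
    using card_le_card_U[OF hH(2), of U] assms(4) by (intro mult_right_mono) auto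
  finally have "1/\<alpha> * (\<Sum>u\<in>U (h+1). \<bar>z u\<bar>) \<le> 2 * \<delta> * card_U H U * card_UA H U / \<alpha>"
    using assms(3) by (simp add: field_simps)
  moreover have "\<bar>\<Sum>u\<in>U (h+1). suffix_weight H U f (h+1) \<omega> u * z u\<bar> \<le> 1/\<alpha> * (\<Sum>u\<in>U (h+1). \<bar>z u\<bar>)"
    using assms(7,9,10) by (intro abs_suffix_weight_inner_le[OF assms(1,3)]) auto
  ultimately show ?thesis
    unfolding z_def by linarith
qed

text \<open>The probability of \<open>\<tau>\<close> under the hybrid process that follows \<open>g\<close> for the first \<open>k\<close>
  steps and \<open>f\<close> afterwards.\<close>
definition hybrid_prob ::
    "nat \<Rightarrow> (nat \<Rightarrow> ('o, 'a) test set) \<Rightarrow> ('o::finite, 'a::finite) model \<Rightarrow> ('o, 'a) model \<Rightarrow> ('o, 'a) hist \<Rightarrow> nat \<Rightarrow> real"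
  where "hybrid_prob H U f g \<tau> k =
    (\<Sum>v\<in>U (k+1). suffix_weight H U f (k+1) (drop k \<tau>) v * joint_prob g (take k \<tau>) v)"

lemma reach_prob_minus_hybrid_prob_0:
  assumes "psr_model H U \<alpha> f" "length \<tau> = H"
  shows "reach_prob f \<tau> - hybrid_prob H U f g \<tau> 0
    = (\<Sum>v\<in>U 1. suffix_weight H U f 1 \<tau> v * (joint_prob f [] v - joint_prob g [] v))"
  using reach_prob_append_eq_suffix_weight[OF assms(1), of \<tau> "[]"] assms(2) psr_model_horizon[OF assms(1)]
  by (cases \<tau>) (simp_all add: hybrid_prob_def right_diff_distrib sum_subtractf)

lemma hybrid_prob_last:
  assumes "psr_model H U \<alpha> g" "length \<tau> = H"
  shows "hybrid_prob H U f g \<tau> (H - 1) = reach_prob g \<tau>"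
proof -
  have H1: "1 \<le> H"
    using psr_model_horizon[OF assms(1)] .
  then have "drop (H - 1) \<tau> = [\<tau> ! (H - 1)]"
    using assms(2) Cons_nth_drop_Suc[of "H - 1" \<tau>] by simp
  then have "hybrid_prob H U f g \<tau> (H - 1) = (\<Sum>v\<in>U (H - 1 + 1).
      suffix_weight H U g (H - 1 + 1) (drop (H - 1) \<tau>) v * joint_prob g (take (H - 1) \<tau>) v)"
    unfolding hybrid_prob_def by simp
  also have "\<dots> = reach_prob g \<tau>"
    using reach_prob_append_eq_suffix_weight[OF assms(1), of "drop (H - 1) \<tau>" "take (H - 1) \<tau>"]
      assms(2) H1 by simp
  finally show ?thesis .
qed

lemma abs_hybrid_prob_step_le:
  assumes "psr_model H U \<alpha> f" "psr_model H U \<alpha> g" "0 < \<alpha>" "0 \<le> \<delta>"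
    and "psr_params_near H U \<delta> f M Q" "psr_params_near H U \<delta> g M Q" "length \<tau> = H" "k < H - 1"
  shows "\<bar>hybrid_prob H U f g \<tau> k - hybrid_prob H U f g \<tau> (Suc k)\<bar> \<le> 2 * \<delta> * card_U H U * card_UA H U / \<alpha>"
proof -
  have drop: "drop k \<tau> = \<tau> ! k # drop (Suc k) \<tau>" "drop (Suc k) \<tau> \<noteq> []"
    using assms(7,8) by (simp_all add: Cons_nth_drop_Suc)
  have take: "take (Suc k) \<tau> = take k \<tau> @ [\<tau> ! k]"
    using assms(7,8) by (simp add: take_Suc_conv_app_nth)
  have "hybrid_prob H U f g \<tau> k - hybrid_prob H U f g \<tau> (Suc k)
      = (\<Sum>u\<in>U (k+1+1). suffix_weight H U f (k+1+1) (drop (Suc k) \<tau>) u *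
          (\<Sum>v\<in>U (k+1). (m_vec H U f (k+1) (ext_test (fst (\<tau> ! k)) (snd (\<tau> ! k)) u) v
              - m_vec H U g (k+1) (ext_test (fst (\<tau> ! k)) (snd (\<tau> ! k)) u) v) * joint_prob g (take k \<tau>) v))"
    using suffix_weight_step_diff[OF assms(2) drop(2), of "take k \<tau>" "k + 1" f "\<tau> ! k"] assms(7,8)
    unfolding hybrid_prob_def drop(1) take by simp
  then show ?thesis
    using assms(7,8) by (simp only:) (rule abs_suffix_weight_step_diff_le[OF assms(1-6) drop(2)]; auto)
qed

lemma reach_prob_diff_le:
  fixes \<alpha> \<delta> :: real
  assumes "psr_model H U \<alpha> f" "psr_model H U \<alpha> g" "0 < \<alpha>" "0 \<le> \<delta>"
    and "psr_params_near H U \<delta> f M Q" "psr_params_near H U \<delta> g M Q" "length \<tau> = H"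
  shows "\<bar>reach_prob f \<tau> - reach_prob g \<tau>\<bar> \<le> real H * (2 * \<delta> * card_U H U * card_UA H U / \<alpha>)"
proof -
  define B where "B = 2 * \<delta> * card_U H U * card_UA H U / \<alpha>"
  let ?T = "hybrid_prob H U f g \<tau>"
  have "reach_prob f \<tau> - reach_prob g \<tau> = (reach_prob f \<tau> - ?T 0) + (\<Sum>k<H - 1. ?T k - ?T (Suc k))"
    unfolding sum_lessThan_telescope' hybrid_prob_last[OF assms(2,7)] by simp
  then have "\<bar>reach_prob f \<tau> - reach_prob g \<tau>\<bar> \<le> \<bar>reach_prob f \<tau> - ?T 0\<bar> + \<bar>\<Sum>k<H - 1. ?T k - ?T (Suc k)\<bar>"
    by (simp add: abs_triangle_ineq)
  moreover have "\<bar>reach_prob f \<tau> - ?T 0\<bar> \<le> B"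
    using abs_suffix_weight_initial_diff_le[OF assms] unfolding B_def reach_prob_minus_hybrid_prob_0[OF assms(1,7)] .
  moreover have "\<bar>\<Sum>k<H - 1. ?T k - ?T (Suc k)\<bar> \<le> (\<Sum>k<H - 1. B)"
    using abs_hybrid_prob_step_le[OF assms] unfolding B_def
    by (intro order.trans[OF sum_abs sum_mono]) auto
  ultimately have "\<bar>reach_prob f \<tau> - reach_prob g \<tau>\<bar> \<le> B + (\<Sum>k<H - 1. B)"
    by linarith
  also have "\<dots> = real H * B"
    using psr_model_horizon[OF assms(1)] by (simp add: algebra_simps of_nat_diff)
  finally show ?thesis
    unfolding B_def .
qed

section \<open>Brackets from covers\<close>

definition policy_prob :: "('o, 'a) policy \<Rightarrow> ('o, 'a) hist \<Rightarrow> real"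
  where "policy_prob \<pi> \<tau> = (\<Prod>i<length \<tau>. \<pi> (take i \<tau>) (fst (\<tau> ! i)) (snd (\<tau> ! i)))"

lemma traj_prob_eq_reach_prob_mult: "traj_prob f \<pi> \<tau> = reach_prob f \<tau> * policy_prob \<pi> \<tau>"
  unfolding traj_prob_def reach_prob_def policy_prob_def by (rule prod.distrib)

lemma policy_prob_bounds:
  assumes "valid_policy (\<pi> :: ('o, 'a::finite) policy)"
  shows "0 \<le> policy_prob \<pi> \<tau>" "policy_prob \<pi> \<tau> \<le> 1"
proof -
  have nonneg: "0 \<le> \<pi> \<sigma> ob a" for \<sigma> ob a
    using assms unfolding valid_policy_def by auto
  have "\<pi> \<sigma> ob a \<le> 1" for \<sigma> ob a
  proof -
    have "\<pi> \<sigma> ob a \<le> (\<Sum>b\<in>UNIV. \<pi> \<sigma> ob b)"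
      by (rule member_le_sum) (auto simp: nonneg)
    then show ?thesis
      using assms unfolding valid_policy_def by auto
  qed
  then show "0 \<le> policy_prob \<pi> \<tau>" "policy_prob \<pi> \<tau> \<le> 1"
    unfolding policy_prob_def by (auto intro!: prod_nonneg prod_le_1 simp: nonneg)
qed

lemma has_bracket_of_reach_prob_close:
  fixes F :: "('o::finite, 'a::finite) model set"
  assumes "\<forall>f\<in>F. \<exists>i<n. C i f"
    and "\<And>i f g \<tau>. f \<in> F \<Longrightarrow> g \<in> F \<Longrightarrow> C i f \<Longrightarrow> C i g \<Longrightarrow> length \<tau> = H \<Longrightarrow>
           \<bar>reach_prob f \<tau> - reach_prob g \<tau>\<bar> \<le> e"
    and "0 \<le> e" "2 * e * real CARD('o \<times> 'a) ^ H \<le> \<epsilon>"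
  shows "has_bracket H F \<epsilon> n"
proof -
  define rep where "rep i = (SOME f. f \<in> F \<and> C i f)" for i
  define g1 where "g1 i \<pi> \<tau> = traj_prob (rep i) \<pi> \<tau> - e * policy_prob \<pi> \<tau>" for i \<pi> \<tau>
  define g2 where "g2 i \<pi> \<tau> = traj_prob (rep i) \<pi> \<tau> + e * policy_prob \<pi> \<tau>" for i \<pi> \<tau>
  have "(\<Sum>\<tau>\<in>{\<tau>. length \<tau> = H}. \<bar>g1 i \<pi> \<tau> - g2 i \<pi> \<tau>\<bar>) \<le> \<epsilon>" if "valid_policy \<pi>" for i \<pi>
  proof -
    have "(\<Sum>\<tau>\<in>{\<tau>. length \<tau> = H}. \<bar>g1 i \<pi> \<tau> - g2 i \<pi> \<tau>\<bar>) = (\<Sum>\<tau>\<in>{\<tau>. length \<tau> = H}. 2 * e * policy_prob \<pi> \<tau>)"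
      unfolding g1_def g2_def using policy_prob_bounds(1)[OF that] assms(3) by (intro sum.cong) auto
    also have "\<dots> \<le> (\<Sum>\<tau>\<in>{\<tau>::('o, 'a) hist. length \<tau> = H}. 2 * e)"
      using policy_prob_bounds[OF that] assms(3) by (intro sum_mono) (simp add: mult_left_le)
    also have "\<dots> = 2 * e * real CARD('o \<times> 'a) ^ H"
      by (simp add: card_lists_length_UNIV)
    finally show ?thesis
      using assms(4) by linarith
  qed
  moreover have "\<exists>i<n. \<forall>\<pi>. valid_policy \<pi> \<longrightarrow> (\<forall>\<tau>. length \<tau> = H \<longrightarrow>
      g1 i \<pi> \<tau> \<le> traj_prob f \<pi> \<tau> \<and> traj_prob f \<pi> \<tau> \<le> g2 i \<pi> \<tau>)" if f: "f \<in> F" for f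
  proof -
    obtain i where i: "i < n" "C i f"
      using assms(1) f by blast
    then have rep: "rep i \<in> F" "C i (rep i)"
      unfolding rep_def using f someI[of "\<lambda>g. g \<in> F \<and> C i g" f] by auto
    have close: "\<bar>traj_prob f \<pi> \<tau> - traj_prob (rep i) \<pi> \<tau>\<bar> \<le> e * policy_prob \<pi> \<tau>"
      if "valid_policy \<pi>" "length \<tau> = H" for \<pi> \<tau>
    proof -
      have "\<bar>traj_prob f \<pi> \<tau> - traj_prob (rep i) \<pi> \<tau>\<bar>
          = \<bar>reach_prob f \<tau> - reach_prob (rep i) \<tau>\<bar> * policy_prob \<pi> \<tau>"
        unfolding traj_prob_eq_reach_prob_mult using policy_prob_bounds(1)[OF that(1)]
        by (simp add: left_diff_distrib[symmetric] abs_mult)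
      also have "\<dots> \<le> e * policy_prob \<pi> \<tau>"
        using assms(2)[OF f rep(1) i(2) rep(2) that(2)] policy_prob_bounds(1)[OF that(1)]
        by (rule mult_right_mono)
      finally show ?thesis .
    qed
    show ?thesis
    proof (intro exI[of _ i] conjI[OF i(1)] allI impI)
      fix \<pi> :: "('o, 'a) policy" and \<tau> :: "('o, 'a) hist"
      assume "valid_policy \<pi>" "length \<tau> = H"
      then show "g1 i \<pi> \<tau> \<le> traj_prob f \<pi> \<tau> \<and> traj_prob f \<pi> \<tau> \<le> g2 i \<pi> \<tau>"
        using close[of \<pi> \<tau>] unfolding g1_def g2_def by linarith
    qed
  qed
  ultimately show ?thesis
    unfolding has_bracket_def by blast
qed

lemma bracket_number_le_covering_number:
  assumes "\<And>n. has_cover H U F \<delta> n \<Longrightarrow> has_bracket H F \<epsilon> n"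
  shows "bracket_number H F \<epsilon> \<le> covering_number H U F \<delta>"
  unfolding bracket_number_def covering_number_def
  using assms by (intro Inf_superset_mono) blast

lemma bracket_width_arith:
  fixes \<alpha> \<epsilon> :: real and n_obs n_act n_U n_UA H :: nat
  assumes "1 \<le> n_obs" "1 \<le> n_U" "1 \<le> n_UA" "1 \<le> H" "0 < \<alpha>" "0 < \<epsilon>"
  defines "\<delta> \<equiv> \<alpha> * \<epsilon> / (8 * real n_obs ^ (H + 1) * real n_act ^ H * real H * real n_UA ^ 2 * real n_U)"
  shows "2 * (real H * (2 * \<delta> * n_U * n_UA / \<alpha>)) * real (n_obs * n_act) ^ H \<le> \<epsilon>"
proof (cases "n_act = 0")
  case True
  then show ?thesis
    using assms(4,6) by (simp add: \<delta>_def)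
next
  case False
  have "2 * (real H * (2 * \<delta> * n_U * n_UA / \<alpha>)) * real (n_obs * n_act) ^ H = \<epsilon> / (2 * n_obs * n_UA)"
    using assms False unfolding \<delta>_def by (simp add: field_simps power2_eq_square power_mult_distrib)
  also have "\<dots> \<le> \<epsilon>"
    using assms by (simp add: field_simps) (simp add: mult_ge1_I)
  finally show ?thesis .
qed

theorem lemma15:
  fixes F :: "('o::finite, 'a::finite) model set"
    and fstar :: "('o, 'a) model"
    and H :: nat and U :: "nat \<Rightarrow> ('o, 'a) test set"
    and \<alpha> \<epsilon> :: real
  assumes "1 \<le> H"
    and "fstar \<in> F"
    and "0 < \<alpha>"
    and "psr_class H U \<alpha> F"
    and "0 < \<epsilon>"
  shows "bracket_number H F \<epsilon> \<le>
           covering_number H U F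
             (\<alpha> * \<epsilon> / (8 * real CARD('o) ^ (H + 1) * real CARD('a) ^ H * real H
                        * real (card_UA H U) ^ 2 * real (card_U H U)))"
proof (rule bracket_number_le_covering_number)
  define \<delta> where "\<delta> = \<alpha> * \<epsilon> / (8 * real CARD('o) ^ (H + 1) * real CARD('a) ^ H * real H
                        * real (card_UA H U) ^ 2 * real (card_U H U))"
  define e where "e = real H * (2 * \<delta> * card_U H U * card_UA H U / \<alpha>)"
  have models: "psr_model H U \<alpha> f" if "f \<in> F" for f
    using psr_class_psr_model[OF assms(4,1) that] .
  have \<delta>: "0 \<le> \<delta>" and e: "0 \<le> e"
    using assms(3,5) by (simp_all add: \<delta>_def e_def)
  have width: "2 * e * real CARD('o \<times> 'a) ^ H \<le> \<epsilon>"
    unfolding e_def \<delta>_def card_prod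
    using psr_model_card_U_ge_1[OF models[OF assms(2)]] assms(1,3,5)
    by (intro bracket_width_arith) auto
  fix n assume "has_cover H U F \<delta> n"
  then obtain M Q where near: "\<forall>f\<in>F. \<exists>i<n. psr_params_near H U \<delta> f (M i) (Q i)"
    unfolding has_cover_iff by blast
  show "has_bracket H F \<epsilon> n"
  proof (rule has_bracket_of_reach_prob_close[OF near _ e width])
    fix i f g and \<tau> :: "('o, 'a) hist"
    assume "f \<in> F" "g \<in> F" "psr_params_near H U \<delta> f (M i) (Q i)" "psr_params_near H U \<delta> g (M i) (Q i)"
      and "length \<tau> = H"
    then show "\<bar>reach_prob f \<tau> - reach_prob g \<tau>\<bar> \<le> e"
      unfolding e_def by (intro reach_prob_diff_le[OF models models assms(3) \<delta>])
  qed
qed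

end
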